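(* Let $A$ be a subalgebra of a $K$-algebra $E$, $\Delta\subseteq\mathrm{Der}_A(E)$, $I$ an ideal of $E$, and $S$ a left denominator set of $E$ with $\mathrm{ass}_E(S)=I$ and $S\subseteq N_\Delta(E)_0$. Let $\overline{E}=E/I$, $I'=A\cap I$, $\overline{A}=A/I'$, $\overline{S}=\{s+I\mid s\in S\}$. Then: (1) $I$ is $\Delta$-stable, i.e. $\delta(I)\subseteq I$ for all $\delta\in\Delta$; hence each $\delta$ induces $\overline{\delta}\in\mathrm{Der}_{\overline{A}}(\overline{E})$, $\overline{\delta}(e+I)=\delta(e)+I$; set $\overline{\Delta}=\{\overline{\delta}\mid\delta\in\Delta\}$. (2) If $\Delta$ is finite, then $S$ is a left denominator set of $N_\Delta(E)$ with $\mathrm{ass}_{N_\Delta(E)}(S)=N_\Delta(E)\cap I$. (3) If $\Delta$ is finite, then $N_\Delta(S^{-1}E)\cong S^{-1}N_\Delta(E)$. (4) If $\Delta$ is finite, then $N_\Delta(S^{-1}E)_i\cong S^{-1}N_\Delta(E)_i$ for all $i\ge0$. (5) $\overline{S}^{-1}\overline{E}\cong S^{-1}E$, $\overline{S}^{-1}N_{\overline{\Delta}}(\overline{E})\cong N_{\overline{\Delta}}(\overline{S}^{-1}\overline{E})\cong N_\Delta(S^{-1}E)$, and $\overline{S}^{-1}N_{\overline{\Delta}}(\overline{E})_i\cong N_{\overline{\Delta}}(\overline{S}^{-1}\overline{E})_i\cong N_\Delta(S^{-1}E)_i$ for all $i\geq0$.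
   Context: $\mathrm{Der}_A(E)$ is the set of derivations of $E$ that are $A$-module homomorphisms (derivations of $S^{-1}E$ are extended by $\delta(s^{-1}e)=s^{-1}\delta(e)$). For $i\ge1$, $\Delta^i=\{\delta_1\cdots\delta_i\mid\delta_j\in\Delta\}$; for an algebra $B$ with $\Delta$ acting by derivations, $N_\Delta(B)_i=\{b\in B\mid\Delta^{i+1}b=0\}$ ($i\ge0$) and $N_\Delta(B)=\bigcup_iN_\Delta(B)_i$. A left denominator set $S$ of a ring $B$ is a multiplicative left Ore set such that $bs=0$ ($b\in B,s\in S$) implies $tb=0$ for some $t\in S$; $\mathrm{ass}_B(S)=\{b\in B\mid sb=0\text{ for some }s\in S\}$; $S^{-1}B$ is the left localization. *)

theory Defs
  imports "HOL-Algebra.Algebra"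
begin

definition kalgebra :: "('k,'a) ring_scheme \<Rightarrow> ('r,'b) ring_scheme \<Rightarrow> ('k \<Rightarrow> 'r) \<Rightarrow> bool" where
  "kalgebra K R phi \<longleftrightarrow> ring R \<and> phi \<in> ring_hom K R \<and>
     (\<forall>k\<in>carrier K. \<forall>x\<in>carrier R. phi k \<otimes>\<^bsub>R\<^esub> x = x \<otimes>\<^bsub>R\<^esub> phi k)"

definition subalgebra :: "('k,'a) ring_scheme \<Rightarrow> ('r,'b) ring_scheme \<Rightarrow> ('k \<Rightarrow> 'r) \<Rightarrow> 'r set \<Rightarrow> bool" where
  "subalgebra K R phi A \<longleftrightarrow> subring A R \<and> phi ` carrier K \<subseteq> A"

definition alg_iso :: "('k,'a) ring_scheme \<Rightarrow> ('r,'b) ring_scheme \<Rightarrow> ('k \<Rightarrow> 'r)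
     \<Rightarrow> ('s,'c) ring_scheme \<Rightarrow> ('k \<Rightarrow> 's) \<Rightarrow> ('r \<Rightarrow> 's) \<Rightarrow> bool" where
  "alg_iso K R psi1 R' psi2 f \<longleftrightarrow> f \<in> ring_iso R R' \<and> (\<forall>k\<in>carrier K. f (psi1 k) = psi2 k)"

definition derivation :: "('r,'b) ring_scheme \<Rightarrow> ('r \<Rightarrow> 'r) \<Rightarrow> bool" where
  "derivation R d \<longleftrightarrow> d \<in> carrier R \<rightarrow> carrier R \<and>
     (\<forall>x\<in>carrier R. \<forall>y\<in>carrier R. d (x \<oplus>\<^bsub>R\<^esub> y) = d x \<oplus>\<^bsub>R\<^esub> d y) \<and>
     (\<forall>x\<in>carrier R. \<forall>y\<in>carrier R. d (x \<otimes>\<^bsub>R\<^esub> y) = d x \<otimes>\<^bsub>R\<^esub> y \<oplus>\<^bsub>R\<^esub> x \<otimes>\<^bsub>R\<^esub> d y)"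

definition der_A :: "('r,'b) ring_scheme \<Rightarrow> 'r set \<Rightarrow> ('r \<Rightarrow> 'r) \<Rightarrow> bool" where
  "der_A R A d \<longleftrightarrow> derivation R d \<and>
     (\<forall>a\<in>A. \<forall>x\<in>carrier R. d (a \<otimes>\<^bsub>R\<^esub> x) = a \<otimes>\<^bsub>R\<^esub> d x)"

text \<open>N_D(R)_i = {b | D^(i+1) b = 0}, where D^(i+1) = all products d_1 ... d_(i+1), d_j in D.\<close>
definition nil_part :: "('r,'b) ring_scheme \<Rightarrow> ('r \<Rightarrow> 'r) set \<Rightarrow> nat \<Rightarrow> 'r set" where
  "nil_part R D i = {b \<in> carrier R. \<forall>ds. length ds = Suc i \<longrightarrow> set ds \<subseteq> D \<longrightarrow>
       foldr (\<lambda>d x. d x) ds b = \<zero>\<^bsub>R\<^esub>}"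

definition nil_all :: "('r,'b) ring_scheme \<Rightarrow> ('r \<Rightarrow> 'r) set \<Rightarrow> 'r set" where
  "nil_all R D = (\<Union>i. nil_part R D i)"

definition Nring :: "('r,'b) ring_scheme \<Rightarrow> ('r \<Rightarrow> 'r) set \<Rightarrow> ('r,'b) ring_scheme" where
  "Nring R D = R\<lparr>carrier := nil_all R D\<rparr>"

definition mult_set :: "('r,'b) ring_scheme \<Rightarrow> 'r set \<Rightarrow> bool" where
  "mult_set R S \<longleftrightarrow> S \<subseteq> carrier R \<and> \<one>\<^bsub>R\<^esub> \<in> S \<and> \<zero>\<^bsub>R\<^esub> \<notin> S \<and>
     (\<forall>s\<in>S. \<forall>t\<in>S. s \<otimes>\<^bsub>R\<^esub> t \<in> S)"

definition left_ore :: "('r,'b) ring_scheme \<Rightarrow> 'r set \<Rightarrow> bool" where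
  "left_ore R S \<longleftrightarrow> (\<forall>s\<in>S. \<forall>r\<in>carrier R. \<exists>t\<in>S. \<exists>r'\<in>carrier R. t \<otimes>\<^bsub>R\<^esub> r = r' \<otimes>\<^bsub>R\<^esub> s)"

definition left_denominator_set :: "('r,'b) ring_scheme \<Rightarrow> 'r set \<Rightarrow> bool" where
  "left_denominator_set R S \<longleftrightarrow> mult_set R S \<and> left_ore R S \<and>
     (\<forall>r\<in>carrier R. \<forall>s\<in>S. r \<otimes>\<^bsub>R\<^esub> s = \<zero>\<^bsub>R\<^esub> \<longrightarrow> (\<exists>t\<in>S. t \<otimes>\<^bsub>R\<^esub> r = \<zero>\<^bsub>R\<^esub>))"

definition ass :: "('r,'b) ring_scheme \<Rightarrow> 'r set \<Rightarrow> 'r set" where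
  "ass R S = {r \<in> carrier R. \<exists>s\<in>S. s \<otimes>\<^bsub>R\<^esub> r = \<zero>\<^bsub>R\<^esub>}"

text \<open>(Q, sigma) is a left ring of fractions S^{-1}R of R with respect to S
  (standard definition, e.g. Stenstroem): sigma : R -> Q ring homomorphism,
  sigma(S) consists of units, every element is sigma(s)^{-1} sigma(r), ker sigma = ass_R(S).\<close>
definition left_fractions :: "('r,'b) ring_scheme \<Rightarrow> 'r set \<Rightarrow> ('q,'c) ring_scheme \<Rightarrow> ('r \<Rightarrow> 'q) \<Rightarrow> bool" where
  "left_fractions R S Q sigma \<longleftrightarrow> ring Q \<and> sigma \<in> ring_hom R Q \<and>
     (\<forall>s\<in>S. sigma s \<in> Units Q) \<and>
     (\<forall>q\<in>carrier Q. \<exists>s\<in>S. \<exists>r\<in>carrier R. q = inv\<^bsub>Q\<^esub> (sigma s) \<otimes>\<^bsub>Q\<^esub> sigma r) \<and>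
     (\<forall>r\<in>carrier R. sigma r = \<zero>\<^bsub>Q\<^esub> \<longleftrightarrow> r \<in> ass R S)"

text \<open>Extension of a derivation d of R to S^{-1}R: d(s^{-1} r) = s^{-1} d(r).\<close>
definition loc_der :: "('r,'b) ring_scheme \<Rightarrow> 'r set \<Rightarrow> ('q,'c) ring_scheme \<Rightarrow> ('r \<Rightarrow> 'q)
    \<Rightarrow> ('r \<Rightarrow> 'r) \<Rightarrow> 'q \<Rightarrow> 'q" where
  "loc_der R S Q sigma d q = (SOME y. \<exists>s\<in>S. \<exists>r\<in>carrier R.
      q = inv\<^bsub>Q\<^esub> (sigma s) \<otimes>\<^bsub>Q\<^esub> sigma r \<and> y = inv\<^bsub>Q\<^esub> (sigma s) \<otimes>\<^bsub>Q\<^esub> sigma (d r))"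

definition loc_ders :: "('r,'b) ring_scheme \<Rightarrow> 'r set \<Rightarrow> ('q,'c) ring_scheme \<Rightarrow> ('r \<Rightarrow> 'q)
    \<Rightarrow> ('r \<Rightarrow> 'r) set \<Rightarrow> ('q \<Rightarrow> 'q) set" where
  "loc_ders R S Q sigma D = (\<lambda>d. loc_der R S Q sigma d) ` D"

definition loc_sub :: "'r set \<Rightarrow> ('q,'c) ring_scheme \<Rightarrow> ('r \<Rightarrow> 'q) \<Rightarrow> 'r set \<Rightarrow> 'q set" where
  "loc_sub S Q sigma M = {inv\<^bsub>Q\<^esub> (sigma s) \<otimes>\<^bsub>Q\<^esub> sigma m | s m. s \<in> S \<and> m \<in> M}"

definition quot_der :: "('r,'b) ring_scheme \<Rightarrow> 'r set \<Rightarrow> ('r \<Rightarrow> 'r) \<Rightarrow> 'r set \<Rightarrow> 'r set" where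
  "quot_der R I d C = a_r_coset R I (d (SOME e. e \<in> C))"

end

theory Submission
  imports Defs
begin

text \<open>Because the denominators are \<open>\<Delta>\<close>-constants, every \<open>\<delta> \<in> \<Delta>\<close> commutes with left
  multiplication by \<open>S\<close>; hence it preserves \<open>ass(S) = I\<close>, descends to \<open>E/I\<close>, and extends to
  \<open>S\<^sup>-\<^sup>1E\<close> by \<open>\<delta>(s\<^sup>-\<^sup>1e) = s\<^sup>-\<^sup>1\<delta>(e)\<close>. So \<open>s\<^sup>-\<^sup>1r\<close> is killed by all words of
  length \<open>i + 1\<close> in \<open>\<Delta>\<close> iff all these words send \<open>r\<close> into \<open>ass(S)\<close>. When \<open>\<Delta>\<close> is finite
  (or \<open>ass(S) = 0\<close>, as for the image of \<open>S\<close> in \<open>E/I\<close>) these finitely many values are killed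
  by a single \<open>u \<in> S\<close>, and \<open>s\<^sup>-\<^sup>1r = (us)\<^sup>-\<^sup>1(ur)\<close> with \<open>ur \<in> N\<^sub>\<Delta>(E)\<^sub>i\<close>; this identifies
  \<open>N\<^sub>\<Delta>(S\<^sup>-\<^sup>1E)\<^sub>i\<close> with \<open>S\<^sup>-\<^sup>1N\<^sub>\<Delta>(E)\<^sub>i\<close>. All isomorphisms are instances of the universal
  property of left fractions: a ring map \<open>B \<rightarrow> T\<close> inverting \<open>S\<close> induces \<open>S\<^sup>-\<^sup>1B \<rightarrow> T\<close>,
  injective when its kernel lies in \<open>ass(S)\<close>. For (5) it is applied to \<open>E \<rightarrow> E/I \<rightarrow> Q\<close>, where
  \<open>Q\<close> is the localization of \<open>E/I\<close> at the image of \<open>S\<close>; the kernel of this map is \<open>ass(S)\<close>.\<close>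

lemma all_lists_image_iff:
  "(\<forall>xs'. length xs' = n \<longrightarrow> set xs' \<subseteq> f ` A \<longrightarrow> P xs') \<longleftrightarrow>
    (\<forall>xs. length xs = n \<longrightarrow> set xs \<subseteq> A \<longrightarrow> P (map f xs))"
proof
  assume H: "\<forall>xs'. length xs' = n \<longrightarrow> set xs' \<subseteq> f ` A \<longrightarrow> P xs'"
  show "\<forall>xs. length xs = n \<longrightarrow> set xs \<subseteq> A \<longrightarrow> P (map f xs)"
  proof (intro allI impI)
    fix xs assume "length xs = n" "set xs \<subseteq> A"
    then show "P (map f xs)" using H[rule_format, of "map f xs"] by auto
  qed
next
  assume H: "\<forall>xs. length xs = n \<longrightarrow> set xs \<subseteq> A \<longrightarrow> P (map f xs)"
  show "\<forall>xs'. length xs' = n \<longrightarrow> set xs' \<subseteq> f ` A \<longrightarrow> P xs'"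
  proof (intro allI impI)
    fix xs' assume len: "length xs' = n" and "set xs' \<subseteq> f ` A"
    then have "xs' \<in> lists (f ` A)" unfolding lists_eq_set by blast
    then have "xs' \<in> map f ` lists A" by (simp only: lists_image)
    then obtain xs where "xs' = map f xs" "set xs \<subseteq> A" unfolding lists_eq_set by blast
    then show "P xs'" using H len by simp
  qed
qed

lemma image_eq_if_preimage:
  assumes "f ` A = B" "P \<subseteq> A" "P' \<subseteq> B" "\<And>x. x \<in> A \<Longrightarrow> f x \<in> P' \<longleftrightarrow> x \<in> P"
  shows "f ` P = P'"
  using assms by blast

section \<open>Iterated derivations and their nilpotent parts\<close>

abbreviation apply_ders :: "('a \<Rightarrow> 'a) list \<Rightarrow> 'a \<Rightarrow> 'a" where
  "apply_ders ds \<equiv> foldr (\<lambda>d x. d x) ds"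

text \<open>\<open>nil_level R D (Suc i)\<close> is \<open>nil_part R D i\<close>; the shift of the index makes the Leibniz rule
  read \<open>nil_level a \<otimes> nil_level b \<subseteq> nil_level (a + b)\<close>.\<close>
primrec nil_level :: "('r,'b) ring_scheme \<Rightarrow> ('r \<Rightarrow> 'r) set \<Rightarrow> nat \<Rightarrow> 'r set" where
  "nil_level R D 0 = {\<zero>\<^bsub>R\<^esub>}"
| "nil_level R D (Suc n) = {x \<in> carrier R. \<forall>d\<in>D. d x \<in> nil_level R D n}"

lemma Nring_simps [simp]:
  "carrier (Nring R D) = nil_all R D" "monoid.mult (Nring R D) = monoid.mult R"
  "monoid.one (Nring R D) = monoid.one R" "ring.zero (Nring R D) = ring.zero R"
  "ring.add (Nring R D) = ring.add R"
  unfolding Nring_def by simp_all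

lemma nil_part_subset_carrier: "nil_part R D i \<subseteq> carrier R"
  unfolding nil_part_def by auto

lemma nil_all_subset_carrier: "nil_all R D \<subseteq> carrier R"
  unfolding nil_all_def nil_part_def by auto

locale diff_ring = ring R for R (structure) +
  fixes D :: "('a \<Rightarrow> 'a) set"
  assumes derivation: "d \<in> D \<Longrightarrow> derivation R d"
begin

lemma der_closed: "d \<in> D \<Longrightarrow> x \<in> carrier R \<Longrightarrow> d x \<in> carrier R"
  using derivation unfolding derivation_def by blast

lemma der_add: "d \<in> D \<Longrightarrow> x \<in> carrier R \<Longrightarrow> y \<in> carrier R \<Longrightarrow> d (x \<oplus> y) = d x \<oplus> d y"
  using derivation unfolding derivation_def by blast

lemma der_mult: "d \<in> D \<Longrightarrow> x \<in> carrier R \<Longrightarrow> y \<in> carrier R \<Longrightarrow> d (x \<otimes> y) = d x \<otimes> y \<oplus> x \<otimes> d y"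
  using derivation unfolding derivation_def by blast

lemma der_zero: assumes "d \<in> D" shows "d \<zero> = \<zero>"
proof -
  have "d \<zero> \<oplus> d \<zero> = d \<zero> \<oplus> \<zero>"
    using der_add[OF assms, of \<zero> \<zero>] der_closed[OF assms, of \<zero>] by simp
  then show ?thesis using der_closed[OF assms, of \<zero>] add.l_cancel by blast
qed

lemma der_one: assumes "d \<in> D" shows "d \<one> = \<zero>"
proof -
  have "d \<one> \<oplus> d \<one> = d \<one> \<oplus> \<zero>"
    using der_mult[OF assms, of \<one> \<one>] der_closed[OF assms, of \<one>] by simp
  then show ?thesis using der_closed[OF assms, of \<one>] add.l_cancel by blast
qed

lemma der_minus: assumes "d \<in> D" "x \<in> carrier R" shows "d (\<ominus> x) = \<ominus> d x"
proof -
  have "d x \<oplus> d (\<ominus> x) = \<zero>"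
    using der_add[OF assms(1,2), of "\<ominus> x"] assms der_zero[OF assms(1)] by (simp add: r_neg)
  then show ?thesis using assms der_closed by (metis a_inv_closed add.inv_closed add.l_cancel r_neg)
qed

lemma apply_ders_closed: "set ds \<subseteq> D \<Longrightarrow> x \<in> carrier R \<Longrightarrow> apply_ders ds x \<in> carrier R"
  by (induction ds) (auto intro: der_closed)

lemma nil_level_subset_carrier: "nil_level R D n \<subseteq> carrier R"
  by (cases n) auto

lemma zero_in_nil_level: "\<zero> \<in> nil_level R D n"
  by (induction n) (auto simp: der_zero)

lemma nil_level_Suc_mono: "nil_level R D n \<subseteq> nil_level R D (Suc n)"
proof (induction n)
  case 0 then show ?case by (auto simp: der_zero)
next
  case (Suc n) then show ?case using nil_level_subset_carrier by auto
qed

lemma nil_level_mono: "m \<le> n \<Longrightarrow> nil_level R D m \<subseteq> nil_level R D n"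
  by (induction n rule: dec_induct) (use nil_level_Suc_mono in blast)+

lemma nil_level_add: "x \<in> nil_level R D n \<Longrightarrow> y \<in> nil_level R D n \<Longrightarrow> x \<oplus> y \<in> nil_level R D n"
  by (induction n arbitrary: x y) (auto simp: der_add)

lemma nil_level_minus: "x \<in> nil_level R D n \<Longrightarrow> \<ominus> x \<in> nil_level R D n"
  by (induction n arbitrary: x) (auto simp: der_minus)

lemma nil_level_mult:
  "x \<in> nil_level R D a \<Longrightarrow> y \<in> nil_level R D b \<Longrightarrow> x \<otimes> y \<in> nil_level R D (a + b)"
proof (induction "a + b" arbitrary: a b x y rule: less_induct)
  case less
  show ?case
  proof (cases "a = 0 \<or> b = 0")
    case True
    have "x \<in> carrier R" "y \<in> carrier R" using less.prems nil_level_subset_carrier by blast+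
    moreover have "x = \<zero> \<or> y = \<zero>" using True less.prems by auto
    ultimately have "x \<otimes> y = \<zero>" by auto
    then show ?thesis using zero_in_nil_level by simp
  next
    case False
    then obtain a' b' where ab: "a = Suc a'" "b = Suc b'" by (meson not0_implies_Suc)
    have x: "x \<in> carrier R" and y: "y \<in> carrier R" using less.prems ab by auto
    have "d (x \<otimes> y) \<in> nil_level R D (a' + b)" if d: "d \<in> D" for d
    proof -
      have "d x \<in> nil_level R D a'" "d y \<in> nil_level R D b'" using less.prems ab d by auto
      then have "d x \<otimes> y \<in> nil_level R D (a' + b)" "x \<otimes> d y \<in> nil_level R D (a + b')"
        using less.hyps[of a' b "d x" y] less.hyps[of a b' x "d y"] less.prems ab by simp_all
      moreover have "a + b' = a' + b" using ab by simp
      ultimately show ?thesis using nil_level_add der_mult[OF d x y] by simp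
    qed
    then show ?thesis using ab x y by simp
  qed
qed

lemma one_in_nil_level: "\<one> \<in> nil_level R D 1"
  by (auto simp: der_one)

lemma nil_part_0: "nil_part R D 0 = {x \<in> carrier R. \<forall>d\<in>D. d x = \<zero>}"
  unfolding nil_part_def by (auto simp: length_Suc_conv)

lemma nil_part_Suc: "nil_part R D (Suc i) = {x \<in> carrier R. \<forall>d\<in>D. d x \<in> nil_part R D i}"
proof -
  have "(\<forall>ds. length ds = Suc (Suc i) \<longrightarrow> set ds \<subseteq> D \<longrightarrow> apply_ders ds x = \<zero>) \<longleftrightarrow>
        (\<forall>d\<in>D. \<forall>ds. length ds = Suc i \<longrightarrow> set ds \<subseteq> D \<longrightarrow> apply_ders ds (d x) = \<zero>)" for x
  proof
    assume H: "\<forall>ds. length ds = Suc (Suc i) \<longrightarrow> set ds \<subseteq> D \<longrightarrow> apply_ders ds x = \<zero>"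
    show "\<forall>d\<in>D. \<forall>ds. length ds = Suc i \<longrightarrow> set ds \<subseteq> D \<longrightarrow> apply_ders ds (d x) = \<zero>"
    proof (intro ballI allI impI)
      fix d ds assume "d \<in> D" "length ds = Suc i" "set ds \<subseteq> D"
      then show "apply_ders ds (d x) = \<zero>" using H[rule_format, of "ds @ [d]"] by simp
    qed
  next
    assume H: "\<forall>d\<in>D. \<forall>ds. length ds = Suc i \<longrightarrow> set ds \<subseteq> D \<longrightarrow> apply_ders ds (d x) = \<zero>"
    show "\<forall>ds. length ds = Suc (Suc i) \<longrightarrow> set ds \<subseteq> D \<longrightarrow> apply_ders ds x = \<zero>"
    proof (intro allI impI)
      fix ds :: "('a \<Rightarrow> 'a) list" assume "length ds = Suc (Suc i)" "set ds \<subseteq> D"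
      moreover obtain ds' d where "ds = ds' @ [d]" using \<open>length ds = _\<close> by (metis length_Suc_conv_rev)
      ultimately show "apply_ders ds x = \<zero>" using H by auto
    qed
  qed
  then show ?thesis unfolding nil_part_def using der_closed by auto
qed

lemma nil_part_eq_nil_level: "nil_part R D i = nil_level R D (Suc i)"
  by (induction i) (simp_all add: nil_part_0 nil_part_Suc)

lemma nil_all_eq_nil_level: "nil_all R D = (\<Union>n. nil_level R D n)"
proof
  show "nil_all R D \<subseteq> (\<Union>n. nil_level R D n)"
    unfolding nil_all_def nil_part_eq_nil_level by blast
  show "(\<Union>n. nil_level R D n) \<subseteq> nil_all R D"
  proof
    fix x assume "x \<in> (\<Union>n. nil_level R D n)"
    then obtain n where "x \<in> nil_level R D n" by blast
    then have "x \<in> nil_part R D n" using nil_level_Suc_mono nil_part_eq_nil_level by blast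
    then show "x \<in> nil_all R D" unfolding nil_all_def by blast
  qed
qed

lemma nil_part_subset_nil_all: "nil_part R D i \<subseteq> nil_all R D"
  unfolding nil_all_def by auto

lemma subring_nil_all: "subring (nil_all R D) R"
proof (rule subringI)
  show "nil_all R D \<subseteq> carrier R" by (rule nil_all_subset_carrier)
  show "\<one> \<in> nil_all R D" unfolding nil_all_eq_nil_level using one_in_nil_level by blast
  show "\<ominus> x \<in> nil_all R D" if "x \<in> nil_all R D" for x
    using that nil_level_minus unfolding nil_all_eq_nil_level by blast
  show "x \<otimes> y \<in> nil_all R D" if "x \<in> nil_all R D" "y \<in> nil_all R D" for x y
    using that nil_level_mult unfolding nil_all_eq_nil_level by blast
  show "x \<oplus> y \<in> nil_all R D" if xy: "x \<in> nil_all R D" "y \<in> nil_all R D" for x y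
  proof -
    obtain a b where "x \<in> nil_level R D a" "y \<in> nil_level R D b"
      using xy unfolding nil_all_eq_nil_level by blast
    then have "x \<in> nil_level R D (max a b)" "y \<in> nil_level R D (max a b)"
      using nil_level_mono[of a "max a b"] nil_level_mono[of b "max a b"] by auto
    then show ?thesis using nil_level_add unfolding nil_all_eq_nil_level by blast
  qed
qed

lemma ring_Nring: "ring (Nring R D)"
  unfolding Nring_def by (rule subring_is_ring[OF subring_nil_all])

end

section \<open>Left denominator sets and left fractions\<close>

lemma (in monoid) Units_inv_mult:
  assumes "x \<in> Units G" "y \<in> Units G" shows "inv (x \<otimes> y) = inv y \<otimes> inv x"
proof -
  have c: "x \<in> carrier G" "y \<in> carrier G" "inv x \<in> carrier G" "inv y \<in> carrier G"
    using assms by auto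
  have "(x \<otimes> y) \<otimes> (inv y \<otimes> inv x) = \<one>"
    using c assms by (simp add: m_assoc[symmetric]) (simp add: m_assoc)
  moreover have "(inv y \<otimes> inv x) \<otimes> (x \<otimes> y) = \<one>"
    using c assms by (simp add: m_assoc[symmetric]) (simp add: m_assoc)
  ultimately show ?thesis using c by (intro inv_unique'[symmetric]) auto
qed

lemma (in monoid) Units_frac_eq_iff:
  assumes U: "x \<in> Units G" "y \<in> Units G" "m \<in> Units G"
    and C: "a \<in> carrier G" "b \<in> carrier G" "n \<in> carrier G"
    and ore: "m \<otimes> y = n \<otimes> x"
  shows "inv x \<otimes> a = inv y \<otimes> b \<longleftrightarrow> n \<otimes> a = m \<otimes> b"
proof -
  have c: "x \<in> carrier G" "y \<in> carrier G" "m \<in> carrier G" "inv x \<in> carrier G" "inv y \<in> carrier G"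
    using U by auto
  have n: "n = m \<otimes> y \<otimes> inv x"
    using ore c C U by (simp add: m_assoc)
  show ?thesis
  proof
    assume h: "inv x \<otimes> a = inv y \<otimes> b"
    have "n \<otimes> a = m \<otimes> y \<otimes> (inv x \<otimes> a)" using n c C by (simp add: m_assoc)
    also have "\<dots> = m \<otimes> y \<otimes> (inv y \<otimes> b)" using h by simp
    also have "\<dots> = m \<otimes> b" using c C U by (simp add: m_assoc[symmetric]) (simp add: m_assoc)
    finally show "n \<otimes> a = m \<otimes> b" .
  next
    assume h: "n \<otimes> a = m \<otimes> b"
    have "m \<otimes> (y \<otimes> (inv x \<otimes> a)) = m \<otimes> b" using h n c C by (simp add: m_assoc)
    then have h2: "y \<otimes> (inv x \<otimes> a) = b" using c C U by simp
    have "inv y \<otimes> b = inv y \<otimes> (y \<otimes> (inv x \<otimes> a))" using h2 by simp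
    also have "\<dots> = inv x \<otimes> a" using c C U by (simp add: m_assoc[symmetric])
    finally show "inv x \<otimes> a = inv y \<otimes> b" by simp
  qed
qed

lemma (in monoid) Units_frac_mult:
  assumes U: "x \<in> Units G" "y \<in> Units G" "m \<in> Units G"
    and C: "a \<in> carrier G" "b \<in> carrier G" "n \<in> carrier G"
    and ore: "m \<otimes> a = n \<otimes> y"
  shows "(inv x \<otimes> a) \<otimes> (inv y \<otimes> b) = inv (m \<otimes> x) \<otimes> (n \<otimes> b)"
proof -
  have c: "x \<in> carrier G" "y \<in> carrier G" "m \<in> carrier G" "inv x \<in> carrier G" "inv y \<in> carrier G"
    "inv m \<in> carrier G"
    using U by auto
  have "a \<otimes> inv y = inv m \<otimes> (m \<otimes> a) \<otimes> inv y" using c C U by (simp add: m_assoc[symmetric])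
  also have "\<dots> = inv m \<otimes> n" using ore c C U by (simp add: m_assoc)
  finally have k: "a \<otimes> inv y = inv m \<otimes> n" .
  have "(inv x \<otimes> a) \<otimes> (inv y \<otimes> b) = inv x \<otimes> (a \<otimes> inv y) \<otimes> b" using c C by (simp add: m_assoc)
  also have "\<dots> = inv x \<otimes> inv m \<otimes> (n \<otimes> b)" using k c C by (simp add: m_assoc)
  also have "\<dots> = inv (m \<otimes> x) \<otimes> (n \<otimes> b)" using Units_inv_mult[of m x] U by simp
  finally show ?thesis .
qed

lemma (in ring) Units_frac_add:
  assumes U: "x \<in> Units R" "y \<in> Units R" "m \<in> Units R"
    and C: "a \<in> carrier R" "b \<in> carrier R" "n \<in> carrier R"
    and ore: "m \<otimes> y = n \<otimes> x"
  shows "inv x \<otimes> a \<oplus> inv y \<otimes> b = inv (m \<otimes> y) \<otimes> (n \<otimes> a \<oplus> m \<otimes> b)"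
proof -
  have c: "x \<in> carrier R" "y \<in> carrier R" "m \<in> carrier R" "inv x \<in> carrier R" "inv y \<in> carrier R"
    "inv m \<in> carrier R"
    using U by auto
  have "y \<otimes> inv x = inv m \<otimes> (m \<otimes> y) \<otimes> inv x" using c C U by (simp add: m_assoc[symmetric])
  also have "\<dots> = inv m \<otimes> n" using ore c C U by (simp add: m_assoc)
  finally have k: "y \<otimes> inv x = inv m \<otimes> n" .
  have "inv (m \<otimes> y) \<otimes> (n \<otimes> a \<oplus> m \<otimes> b) = inv y \<otimes> inv m \<otimes> (n \<otimes> a) \<oplus> inv y \<otimes> inv m \<otimes> (m \<otimes> b)"
    using Units_inv_mult[of m y] U c C by (simp add: r_distr)
  also have "inv y \<otimes> inv m \<otimes> (n \<otimes> a) = inv y \<otimes> (inv m \<otimes> n) \<otimes> a" using c C by (simp add: m_assoc)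
  also have "\<dots> = inv x \<otimes> a" using k[symmetric] c C U by (simp add: m_assoc[symmetric])
  also have "inv y \<otimes> inv m \<otimes> (m \<otimes> b) = inv y \<otimes> b"
    using c C U by (simp add: m_assoc[symmetric]) (simp add: m_assoc)
  finally show ?thesis by simp
qed

lemma (in ring) Units_frac_eq_zero_iff:
  assumes "x \<in> Units R" "a \<in> carrier R" shows "inv x \<otimes> a = \<zero> \<longleftrightarrow> a = \<zero>"
  using Units_l_cancel[of "inv x" a \<zero>] assms by simp

locale left_denominator = ring R for R (structure) +
  fixes S assumes left_denominator_set: "left_denominator_set R S"
begin

lemma denom_closed: "s \<in> S \<Longrightarrow> s \<in> carrier R"
  using left_denominator_set unfolding left_denominator_set_def mult_set_def by blast

lemma one_in_denom: "\<one> \<in> S"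
  using left_denominator_set unfolding left_denominator_set_def mult_set_def by blast

lemma zero_notin_denom: "\<zero> \<notin> S"
  using left_denominator_set unfolding left_denominator_set_def mult_set_def by blast

lemma denom_mult_closed: "s \<in> S \<Longrightarrow> t \<in> S \<Longrightarrow> s \<otimes> t \<in> S"
  using left_denominator_set unfolding left_denominator_set_def mult_set_def by blast

lemma left_ore: "s \<in> S \<Longrightarrow> r \<in> carrier R \<Longrightarrow> \<exists>t\<in>S. \<exists>r'\<in>carrier R. t \<otimes> r = r' \<otimes> s"
  using left_denominator_set unfolding left_denominator_set_def left_ore_def by blast

lemma right_zero_divisor_in_ass: "r \<in> carrier R \<Longrightarrow> s \<in> S \<Longrightarrow> r \<otimes> s = \<zero> \<Longrightarrow> r \<in> ass R S"
  using left_denominator_set unfolding left_denominator_set_def ass_def by blast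

lemma zero_in_ass: "\<zero> \<in> ass R S"
  unfolding ass_def using one_in_denom by force

lemma ass_left_mult: assumes "x \<in> ass R S" "y \<in> carrier R" shows "y \<otimes> x \<in> ass R S"
proof -
  obtain s where s: "s \<in> S" "s \<otimes> x = \<zero>" "x \<in> carrier R" using assms(1) unfolding ass_def by blast
  obtain t r' where tr: "t \<in> S" "r' \<in> carrier R" "t \<otimes> y = r' \<otimes> s" using left_ore[OF s(1) assms(2)] by blast
  have "t \<otimes> (y \<otimes> x) = (t \<otimes> y) \<otimes> x"
    using tr(1) s(3) assms(2) denom_closed by (simp add: m_assoc)
  also have "\<dots> = r' \<otimes> (s \<otimes> x)"
    using tr s(1,3) denom_closed by (simp add: m_assoc)
  finally have "t \<otimes> (y \<otimes> x) = r' \<otimes> (s \<otimes> x)" .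
  then show ?thesis using tr s assms unfolding ass_def by auto
qed

lemma common_annihilator:
  assumes "finite F" "F \<subseteq> ass R S" shows "\<exists>u\<in>S. \<forall>x\<in>F. u \<otimes> x = \<zero>"
  using assms
proof (induction F rule: finite_induct)
  case empty then show ?case using one_in_denom by blast
next
  case (insert x F)
  then obtain u where u: "u \<in> S" "\<forall>y\<in>F. u \<otimes> y = \<zero>" by auto
  have x: "x \<in> ass R S" "x \<in> carrier R" using insert.prems unfolding ass_def by auto
  obtain v where v: "v \<in> S" "v \<otimes> (u \<otimes> x) = \<zero>"
    using ass_left_mult[OF x(1) denom_closed[OF u(1)]] unfolding ass_def by blast
  have "(v \<otimes> u) \<otimes> y = \<zero>" if "y \<in> insert x F" for y
  proof -
    have "y \<in> carrier R" using that insert.prems unfolding ass_def by auto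
    then show ?thesis using that u v denom_closed by (auto simp: m_assoc)
  qed
  then show ?case using denom_mult_closed[OF v(1) u(1)] by blast
qed

lemma ass_denom_mult_left_cancel:
  assumes "s \<in> S" "x \<in> carrier R" "s \<otimes> x \<in> ass R S" shows "x \<in> ass R S"
proof -
  obtain v where v: "v \<in> S" "v \<otimes> (s \<otimes> x) = \<zero>" using assms(3) unfolding ass_def by blast
  then have "(v \<otimes> s) \<otimes> x = \<zero>" using assms(1,2) denom_closed by (simp add: m_assoc)
  then show ?thesis using denom_mult_closed[OF v(1) assms(1)] assms(2) unfolding ass_def by blast
qed

lemma ass_denom_mult_right_cancel:
  assumes "s \<in> S" "x \<in> carrier R" "x \<otimes> s \<in> ass R S" shows "x \<in> ass R S"
proof -
  obtain v where v: "v \<in> S" "v \<otimes> (x \<otimes> s) = \<zero>" using assms(3) unfolding ass_def by blast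
  then have "(v \<otimes> x) \<otimes> s = \<zero>" using assms(1,2) denom_closed by (simp add: m_assoc)
  then have "v \<otimes> x \<in> ass R S" using right_zero_divisor_in_ass assms(1,2) v(1) denom_closed by blast
  then show ?thesis using ass_denom_mult_left_cancel[OF v(1) assms(2)] by blast
qed

end

definition lfrac :: "('t,'c) ring_scheme \<Rightarrow> ('r \<Rightarrow> 't) \<Rightarrow> 'r \<Rightarrow> 'r \<Rightarrow> 't" where
  "lfrac T \<phi> s r = inv\<^bsub>T\<^esub> (\<phi> s) \<otimes>\<^bsub>T\<^esub> \<phi> r"

definition frac_ext :: "('r,'b) ring_scheme \<Rightarrow> 'r set \<Rightarrow> ('q,'c) ring_scheme \<Rightarrow> ('r \<Rightarrow> 'q)
    \<Rightarrow> ('t,'d) ring_scheme \<Rightarrow> ('r \<Rightarrow> 't) \<Rightarrow> 'q \<Rightarrow> 't" where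
  "frac_ext R S Q \<sigma> T \<phi> q = (SOME y. \<exists>s\<in>S. \<exists>r\<in>carrier R. q = lfrac Q \<sigma> s r \<and> y = lfrac T \<phi> s r)"

lemma loc_sub_eq: "loc_sub S T \<phi> M = {lfrac T \<phi> s m | s m. s \<in> S \<and> m \<in> M}"
  unfolding loc_sub_def lfrac_def by simp

lemma loc_sub_comp: "loc_sub S T (f \<circ> g) M = loc_sub (g ` S) T f (g ` M)"
  unfolding loc_sub_def by auto

locale inverting_hom = left_denominator R S for R (structure) and S +
  fixes T :: "('t,'c) ring_scheme" and \<phi>
  assumes ring_T: "ring T"
    and hom: "\<phi> \<in> ring_hom R T"
    and denom_Units: "s \<in> S \<Longrightarrow> \<phi> s \<in> Units T"
begin

interpretation T: ring T by (rule ring_T)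
interpretation ring_hom_ring R T \<phi> by (intro ring_hom_ringI2 ring_axioms ring_T hom)

lemma lfrac_closed: "s \<in> S \<Longrightarrow> r \<in> carrier R \<Longrightarrow> lfrac T \<phi> s r \<in> carrier T"
  unfolding lfrac_def using denom_Units by auto

lemma lfrac_one: "r \<in> carrier R \<Longrightarrow> lfrac T \<phi> \<one> r = \<phi> r"
  unfolding lfrac_def by simp

lemma lfrac_eq_iff:
  assumes "s \<in> S" "t \<in> S" "u \<in> S" "r \<in> carrier R" "r' \<in> carrier R" "b \<in> carrier R"
    and ore: "u \<otimes> t = b \<otimes> s"
  shows "lfrac T \<phi> s r = lfrac T \<phi> t r' \<longleftrightarrow> \<phi> (b \<otimes> r) = \<phi> (u \<otimes> r')"
proof -
  have "\<phi> u \<otimes>\<^bsub>T\<^esub> \<phi> t = \<phi> b \<otimes>\<^bsub>T\<^esub> \<phi> s" using ore assms denom_closed by (metis hom_mult)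
  then show ?thesis
    unfolding lfrac_def using assms denom_Units denom_closed by (subst T.Units_frac_eq_iff) auto
qed

lemma lfrac_eq_zero_iff: "s \<in> S \<Longrightarrow> r \<in> carrier R \<Longrightarrow> lfrac T \<phi> s r = \<zero>\<^bsub>T\<^esub> \<longleftrightarrow> \<phi> r = \<zero>\<^bsub>T\<^esub>"
  unfolding lfrac_def using denom_Units by (simp add: T.Units_frac_eq_zero_iff)

lemma lfrac_cancel:
  assumes "u \<in> S" "s \<in> S" "r \<in> carrier R"
  shows "lfrac T \<phi> (u \<otimes> s) (u \<otimes> r) = lfrac T \<phi> s r"
proof -
  have U: "\<phi> u \<in> Units T" "\<phi> s \<in> Units T" using assms denom_Units by auto
  have "inv\<^bsub>T\<^esub> (\<phi> u) \<otimes>\<^bsub>T\<^esub> (\<phi> u \<otimes>\<^bsub>T\<^esub> \<phi> r) = \<phi> r"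
    using U(1) ring_hom_closed[OF hom assms(3)] by (simp add: T.m_assoc[symmetric] T.Units_closed)
  then show ?thesis
    unfolding lfrac_def using assms U denom_closed T.Units_inv_mult[OF U] by (simp add: T.m_assoc)
qed

lemma lfrac_mult:
  assumes "s \<in> S" "t \<in> S" "u \<in> S" "a \<in> carrier R" "b \<in> carrier R" "c \<in> carrier R"
    and ore: "u \<otimes> a = c \<otimes> t"
  shows "lfrac T \<phi> s a \<otimes>\<^bsub>T\<^esub> lfrac T \<phi> t b = lfrac T \<phi> (u \<otimes> s) (c \<otimes> b)"
proof -
  have "\<phi> u \<otimes>\<^bsub>T\<^esub> \<phi> a = \<phi> c \<otimes>\<^bsub>T\<^esub> \<phi> t" using ore assms denom_closed by (metis hom_mult)
  then show ?thesis
    unfolding lfrac_def using assms denom_Units denom_closed T.Units_frac_mult by simp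
qed

lemma lfrac_add:
  assumes "s \<in> S" "t \<in> S" "u \<in> S" "a \<in> carrier R" "b \<in> carrier R" "c \<in> carrier R"
    and ore: "u \<otimes> t = c \<otimes> s"
  shows "lfrac T \<phi> s a \<oplus>\<^bsub>T\<^esub> lfrac T \<phi> t b = lfrac T \<phi> (u \<otimes> t) (c \<otimes> a \<oplus> u \<otimes> b)"
proof -
  have "\<phi> u \<otimes>\<^bsub>T\<^esub> \<phi> t = \<phi> c \<otimes>\<^bsub>T\<^esub> \<phi> s" using ore assms denom_closed by (metis hom_mult)
  then show ?thesis
    unfolding lfrac_def using assms denom_Units denom_closed T.Units_frac_add by simp
qed

lemma ass_in_kernel: assumes "x \<in> ass R S" shows "\<phi> x = \<zero>\<^bsub>T\<^esub>"
proof -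
  obtain w where w: "w \<in> S" "w \<otimes> x = \<zero>" "x \<in> carrier R" using assms unfolding ass_def by blast
  then have "\<phi> w \<otimes>\<^bsub>T\<^esub> \<phi> x = \<phi> w \<otimes>\<^bsub>T\<^esub> \<zero>\<^bsub>T\<^esub>" using denom_closed by (metis hom_mult hom_zero T.r_null hom_closed)
  then show ?thesis using w denom_Units by simp
qed

end

locale left_fraction_ring = inverting_hom R S Q \<sigma>
  for R (structure) and S and Q :: "('q,'c) ring_scheme" and \<sigma> +
  assumes lfrac_surj: "q \<in> carrier Q \<Longrightarrow> \<exists>s\<in>S. \<exists>r\<in>carrier R. q = lfrac Q \<sigma> s r"
    and kernel_eq_ass: "r \<in> carrier R \<Longrightarrow> \<sigma> r = \<zero>\<^bsub>Q\<^esub> \<longleftrightarrow> r \<in> ass R S"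

lemma left_fraction_ringI:
  "ring R \<Longrightarrow> left_denominator_set R S \<Longrightarrow> left_fractions R S Q \<sigma> \<Longrightarrow> left_fraction_ring R S Q \<sigma>"
  unfolding left_fractions_def left_fraction_ring_def left_fraction_ring_axioms_def
    inverting_hom_def inverting_hom_axioms_def left_denominator_def left_denominator_axioms_def lfrac_def
  by blast

context left_fraction_ring
begin

sublocale Q: ring Q by (rule ring_T)
sublocale \<sigma>: ring_hom_ring R Q \<sigma> by (intro ring_hom_ringI2 ring_axioms ring_T hom)

lemma carrier_eq_loc_sub: "carrier Q = loc_sub S Q \<sigma> (carrier R)"
proof
  show "carrier Q \<subseteq> loc_sub S Q \<sigma> (carrier R)" unfolding loc_sub_eq using lfrac_surj by blast
  show "loc_sub S Q \<sigma> (carrier R) \<subseteq> carrier Q" unfolding loc_sub_eq using lfrac_closed by blast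
qed

lemma eq_iff_diff_in_ass:
  assumes "x \<in> carrier R" "y \<in> carrier R" shows "\<sigma> x = \<sigma> y \<longleftrightarrow> x \<ominus> y \<in> ass R S"
proof -
  have "\<sigma> x = \<sigma> y \<longleftrightarrow> \<sigma> (x \<ominus> y) = \<zero>\<^bsub>Q\<^esub>"
    using assms by (simp add: minus_eq Q.minus_eq[symmetric] Q.r_right_minus_eq)
  then show ?thesis using kernel_eq_ass assms by simp
qed

lemma SOME_lfrac_repr:
  assumes wd: "\<And>s t r r'. \<lbrakk>s \<in> S; t \<in> S; r \<in> carrier R; r' \<in> carrier R;
      lfrac Q \<sigma> s r = lfrac Q \<sigma> t r'\<rbrakk> \<Longrightarrow> F s r = F t r'"
    and "s \<in> S" "r \<in> carrier R"
  shows "(SOME y. \<exists>s'\<in>S. \<exists>r'\<in>carrier R. lfrac Q \<sigma> s r = lfrac Q \<sigma> s' r' \<and> y = F s' r') = F s r"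
proof -
  let ?P = "\<lambda>y. \<exists>s'\<in>S. \<exists>r'\<in>carrier R. lfrac Q \<sigma> s r = lfrac Q \<sigma> s' r' \<and> y = F s' r'"
  have "?P (F s r)" using assms(2,3) by blast
  then have "?P (SOME y. ?P y)" by (rule someI)
  then obtain s' r' where "s' \<in> S" "r' \<in> carrier R" "lfrac Q \<sigma> s r = lfrac Q \<sigma> s' r'"
    and "(SOME y. ?P y) = F s' r'" by blast
  then show ?thesis using wd[of s s' r r'] assms(2,3) by simp
qed

context
  fixes T :: "('t,'d) ring_scheme" and \<phi>
  assumes inverting: "inverting_hom R S T \<phi>"
begin

interpretation T: inverting_hom R S T \<phi> by (rule inverting)
interpretation T: ring T by (rule T.ring_T)
interpretation \<phi>: ring_hom_ring R T \<phi> by (intro ring_hom_ringI2 ring_axioms T.ring_T T.hom)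

lemma frac_ext_well_defined:
  assumes "s \<in> S" "t \<in> S" "r \<in> carrier R" "r' \<in> carrier R" "lfrac Q \<sigma> s r = lfrac Q \<sigma> t r'"
  shows "lfrac T \<phi> s r = lfrac T \<phi> t r'"
proof -
  obtain u b where ub: "u \<in> S" "b \<in> carrier R" "u \<otimes> t = b \<otimes> s"
    using left_ore[OF assms(1) denom_closed[OF assms(2)]] by blast
  have c: "b \<otimes> r \<in> carrier R" "u \<otimes> r' \<in> carrier R" using ub assms denom_closed by auto
  have "\<sigma> (b \<otimes> r) = \<sigma> (u \<otimes> r')" using lfrac_eq_iff[OF assms(1,2) ub(1) assms(3,4) ub(2,3)] assms(5) by simp
  then have "\<phi> (b \<otimes> r \<ominus> u \<otimes> r') = \<zero>\<^bsub>T\<^esub>" using eq_iff_diff_in_ass[OF c] T.ass_in_kernel by simp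
  then have "\<phi> (b \<otimes> r) = \<phi> (u \<otimes> r')"
    using c by (simp add: minus_eq T.minus_eq[symmetric] T.r_right_minus_eq)
  then show ?thesis using T.lfrac_eq_iff[OF assms(1,2) ub(1) assms(3,4) ub(2,3)] by simp
qed

lemma frac_ext_lfrac:
  "s \<in> S \<Longrightarrow> r \<in> carrier R \<Longrightarrow> frac_ext R S Q \<sigma> T \<phi> (lfrac Q \<sigma> s r) = lfrac T \<phi> s r"
  unfolding frac_ext_def by (rule SOME_lfrac_repr[OF frac_ext_well_defined])

lemma frac_ext_hom: "frac_ext R S Q \<sigma> T \<phi> \<in> ring_hom Q T"
proof (rule ring_hom_memI)
  fix q assume "q \<in> carrier Q"
  then obtain s r where "s \<in> S" "r \<in> carrier R" "q = lfrac Q \<sigma> s r" using lfrac_surj by blast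
  then show "frac_ext R S Q \<sigma> T \<phi> q \<in> carrier T" using frac_ext_lfrac T.lfrac_closed by simp
next
  fix q1 q2 assume "q1 \<in> carrier Q" "q2 \<in> carrier Q"
  then obtain s a t b where sa: "s \<in> S" "a \<in> carrier R" "q1 = lfrac Q \<sigma> s a"
    and tb: "t \<in> S" "b \<in> carrier R" "q2 = lfrac Q \<sigma> t b"
    using lfrac_surj by meson
  obtain u c where uc: "u \<in> S" "c \<in> carrier R" "u \<otimes> a = c \<otimes> t" using left_ore[OF tb(1) sa(2)] by blast
  show "frac_ext R S Q \<sigma> T \<phi> (q1 \<otimes>\<^bsub>Q\<^esub> q2) = frac_ext R S Q \<sigma> T \<phi> q1 \<otimes>\<^bsub>T\<^esub> frac_ext R S Q \<sigma> T \<phi> q2"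
    using sa tb uc lfrac_mult[OF sa(1) tb(1) uc(1) sa(2) tb(2) uc(2,3)]
      T.lfrac_mult[OF sa(1) tb(1) uc(1) sa(2) tb(2) uc(2,3)] frac_ext_lfrac denom_mult_closed
    by simp
next
  fix q1 q2 assume "q1 \<in> carrier Q" "q2 \<in> carrier Q"
  then obtain s a t b where sa: "s \<in> S" "a \<in> carrier R" "q1 = lfrac Q \<sigma> s a"
    and tb: "t \<in> S" "b \<in> carrier R" "q2 = lfrac Q \<sigma> t b"
    using lfrac_surj by meson
  obtain u c where uc: "u \<in> S" "c \<in> carrier R" "u \<otimes> t = c \<otimes> s"
    using left_ore[OF sa(1) denom_closed[OF tb(1)]] by blast
  have "c \<otimes> a \<oplus> u \<otimes> b \<in> carrier R" using sa tb uc denom_closed by auto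
  then show "frac_ext R S Q \<sigma> T \<phi> (q1 \<oplus>\<^bsub>Q\<^esub> q2) = frac_ext R S Q \<sigma> T \<phi> q1 \<oplus>\<^bsub>T\<^esub> frac_ext R S Q \<sigma> T \<phi> q2"
    using sa tb uc(1,2) lfrac_add[OF sa(1) tb(1) uc(1) sa(2) tb(2) uc(2,3)]
      T.lfrac_add[OF sa(1) tb(1) uc(1) sa(2) tb(2) uc(2,3)] frac_ext_lfrac denom_mult_closed
    by simp
next
  show "frac_ext R S Q \<sigma> T \<phi> \<one>\<^bsub>Q\<^esub> = \<one>\<^bsub>T\<^esub>"
    using frac_ext_lfrac[OF one_in_denom one_closed] lfrac_one T.lfrac_one by simp
qed

lemma frac_ext_inj:
  assumes "\<And>x. x \<in> carrier R \<Longrightarrow> \<phi> x = \<zero>\<^bsub>T\<^esub> \<Longrightarrow> x \<in> ass R S"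
  shows "inj_on (frac_ext R S Q \<sigma> T \<phi>) (carrier Q)"
proof -
  have ext: "ring_hom_ring Q T (frac_ext R S Q \<sigma> T \<phi>)"
    using ring_hom_ringI2[OF Q.ring_axioms T.ring_T frac_ext_hom] .
  have "q = \<zero>\<^bsub>Q\<^esub>" if q: "q \<in> carrier Q" "frac_ext R S Q \<sigma> T \<phi> q = \<zero>\<^bsub>T\<^esub>" for q
  proof -
    obtain s r where sr: "s \<in> S" "r \<in> carrier R" "q = lfrac Q \<sigma> s r" using lfrac_surj q(1) by blast
    then have "\<phi> r = \<zero>\<^bsub>T\<^esub>" using q(2) frac_ext_lfrac T.lfrac_eq_zero_iff by simp
    then have "\<sigma> r = \<zero>\<^bsub>Q\<^esub>" using sr(2) assms kernel_eq_ass by blast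
    then show ?thesis using sr lfrac_eq_zero_iff by simp
  qed
  moreover have "frac_ext R S Q \<sigma> T \<phi> \<zero>\<^bsub>Q\<^esub> = \<zero>\<^bsub>T\<^esub>"
    using ring_hom_zero[OF frac_ext_hom Q.ring_axioms T.ring_T] .
  ultimately have "a_kernel Q T (frac_ext R S Q \<sigma> T \<phi>) = {\<zero>\<^bsub>Q\<^esub>}"
    unfolding a_kernel_def' by blast
  then show ?thesis by (rule ring_hom_ring.trivial_ker_imp_inj[OF ext])
qed

lemma frac_ext_image:
  assumes "M \<subseteq> carrier R"
  shows "frac_ext R S Q \<sigma> T \<phi> ` loc_sub S Q \<sigma> M = loc_sub S T \<phi> M"
proof
  show "frac_ext R S Q \<sigma> T \<phi> ` loc_sub S Q \<sigma> M \<subseteq> loc_sub S T \<phi> M"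
  proof
    fix y assume "y \<in> frac_ext R S Q \<sigma> T \<phi> ` loc_sub S Q \<sigma> M"
    then obtain s m where sm: "s \<in> S" "m \<in> M" "y = frac_ext R S Q \<sigma> T \<phi> (lfrac Q \<sigma> s m)"
      unfolding loc_sub_eq by blast
    moreover have "m \<in> carrier R" using sm(2) assms by blast
    ultimately have "y = lfrac T \<phi> s m" using frac_ext_lfrac by simp
    then show "y \<in> loc_sub S T \<phi> M" unfolding loc_sub_eq using sm by blast
  qed
  show "loc_sub S T \<phi> M \<subseteq> frac_ext R S Q \<sigma> T \<phi> ` loc_sub S Q \<sigma> M"
  proof
    fix y assume "y \<in> loc_sub S T \<phi> M"
    then obtain s m where sm: "s \<in> S" "m \<in> M" "y = lfrac T \<phi> s m" unfolding loc_sub_eq by blast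
    moreover have "m \<in> carrier R" using sm(2) assms by blast
    ultimately have "y = frac_ext R S Q \<sigma> T \<phi> (lfrac Q \<sigma> s m)" using frac_ext_lfrac by simp
    moreover have "lfrac Q \<sigma> s m \<in> loc_sub S Q \<sigma> M" unfolding loc_sub_eq using sm by blast
    ultimately show "y \<in> frac_ext R S Q \<sigma> T \<phi> ` loc_sub S Q \<sigma> M" by blast
  qed
qed

end

end

lemma ring_iso_carrier_restrict:
  assumes "h \<in> ring_hom R R'" "inj_on h M" "M \<subseteq> carrier R" "h ` M = M'"
  shows "h \<in> ring_iso (R\<lparr>carrier := M\<rparr>) (R'\<lparr>carrier := M'\<rparr>)"
proof -
  have "h (x \<otimes>\<^bsub>R\<^esub> y) = h x \<otimes>\<^bsub>R'\<^esub> h y" "h (x \<oplus>\<^bsub>R\<^esub> y) = h x \<oplus>\<^bsub>R'\<^esub> h y"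
    if "x \<in> M" "y \<in> M" for x y
  proof -
    have "x \<in> carrier R" "y \<in> carrier R" using that assms(3) by blast+
    then show "h (x \<otimes>\<^bsub>R\<^esub> y) = h x \<otimes>\<^bsub>R'\<^esub> h y" "h (x \<oplus>\<^bsub>R\<^esub> y) = h x \<oplus>\<^bsub>R'\<^esub> h y"
      using assms(1) unfolding ring_hom_def by blast+
  qed
  then show ?thesis
    using assms unfolding ring_iso_def ring_hom_def bij_betw_def by auto
qed

lemma alg_iso_carrier_restrict:
  assumes "alg_iso K R \<psi> R' \<psi>' h" "M \<subseteq> carrier R" "h ` M = M'"
  shows "alg_iso K (R\<lparr>carrier := M\<rparr>) \<psi> (R'\<lparr>carrier := M'\<rparr>) \<psi>' h"
proof -
  have "h \<in> ring_hom R R'" "inj_on h M"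
    using assms(1,2) inj_on_subset unfolding alg_iso_def ring_iso_def bij_betw_def by blast+
  then show ?thesis using ring_iso_carrier_restrict assms unfolding alg_iso_def by blast
qed

lemma alg_iso_inv_into:
  assumes "ring R" "h \<in> ring_iso R R'" "\<And>k. k \<in> carrier K \<Longrightarrow> \<psi> k \<in> carrier R"
    and "\<And>k. k \<in> carrier K \<Longrightarrow> h (\<psi> k) = \<psi>' k"
  shows "alg_iso K R' \<psi>' R \<psi> (inv_into (carrier R) h)"
proof -
  have "inj_on h (carrier R)" using assms(2) unfolding ring_iso_def bij_betw_def by blast
  then have "inv_into (carrier R) h (\<psi>' k) = \<psi> k" if "k \<in> carrier K" for k
    using inv_into_f_f[of h "carrier R" "\<psi> k"] assms(3,4) that by simp
  then show ?thesis unfolding alg_iso_def using ring_iso_set_sym[OF assms(1,2)] by blast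
qed

section \<open>Derivations of a ring of left fractions\<close>

locale diff_left_denominator = diff_ring R D + left_denominator R S for R (structure) and D S +
  assumes denom_constant: "S \<subseteq> nil_part R D 0"
begin

lemma der_denom: "d \<in> D \<Longrightarrow> s \<in> S \<Longrightarrow> d s = \<zero>"
  using denom_constant unfolding nil_part_0 by blast

lemma der_denom_mult_left:
  assumes "d \<in> D" "s \<in> S" "x \<in> carrier R" shows "d (s \<otimes> x) = s \<otimes> d x"
  using der_mult[OF assms(1) denom_closed[OF assms(2)] assms(3)] der_denom[OF assms(1,2)]
    der_closed[OF assms(1,3)] denom_closed[OF assms(2)] assms(3) by simp

lemma der_denom_mult_right:
  assumes "d \<in> D" "s \<in> S" "x \<in> carrier R" shows "d (x \<otimes> s) = d x \<otimes> s"
  using der_mult[OF assms(1,3) denom_closed[OF assms(2)]] der_denom[OF assms(1,2)]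
    der_closed[OF assms(1,3)] denom_closed[OF assms(2)] assms(3) by simp

lemma apply_ders_denom_mult_left:
  "set ds \<subseteq> D \<Longrightarrow> s \<in> S \<Longrightarrow> x \<in> carrier R \<Longrightarrow> apply_ders ds (s \<otimes> x) = s \<otimes> apply_ders ds x"
  by (induction ds) (auto simp: der_denom_mult_left apply_ders_closed)

lemma apply_ders_denom_mult_right:
  "set ds \<subseteq> D \<Longrightarrow> s \<in> S \<Longrightarrow> x \<in> carrier R \<Longrightarrow> apply_ders ds (x \<otimes> s) = apply_ders ds x \<otimes> s"
  by (induction ds) (auto simp: der_denom_mult_right apply_ders_closed)

lemma der_ass: assumes "d \<in> D" "x \<in> ass R S" shows "d x \<in> ass R S"
proof -
  obtain s where s: "s \<in> S" "s \<otimes> x = \<zero>" "x \<in> carrier R" using assms(2) unfolding ass_def by blast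
  have "s \<otimes> d x = \<zero>" using der_denom_mult_left[OF assms(1) s(1,3)] s(2) der_zero[OF assms(1)] by simp
  then show ?thesis using s der_closed[OF assms(1) s(3)] unfolding ass_def by blast
qed

lemma denom_subset_nil_all: "S \<subseteq> nil_all R D"
  using denom_constant nil_part_subset_nil_all by blast

text \<open>Either hypothesis on \<open>D\<close> makes the set of values \<open>D\<^sup>i\<^sup>+\<^sup>1 r\<close> finite, so that a
  single denominator annihilates all of them.\<close>
lemma denom_mult_in_nil_part:
  assumes fin: "finite D \<or> ass R S \<subseteq> {\<zero>}" and r: "r \<in> carrier R"
    and ass: "\<And>ds. length ds = Suc i \<Longrightarrow> set ds \<subseteq> D \<Longrightarrow> apply_ders ds r \<in> ass R S"
  shows "\<exists>u\<in>S. u \<otimes> r \<in> nil_part R D i"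
proof -
  let ?F = "(\<lambda>ds. apply_ders ds r) ` {ds. set ds \<subseteq> D \<and> length ds = Suc i}"
  have F: "?F \<subseteq> ass R S" using ass by blast
  have "finite ?F"
    using fin
  proof
    assume "finite D" then show ?thesis by (intro finite_imageI finite_lists_length_eq)
  next
    assume "ass R S \<subseteq> {\<zero>}"
    then have "?F \<subseteq> {\<zero>}" using F by (rule order_trans[rotated])
    then show ?thesis by (rule finite_subset) simp
  qed
  then obtain u where u: "u \<in> S" "\<forall>y\<in>?F. u \<otimes> y = \<zero>" using common_annihilator[OF _ F] by blast
  have "apply_ders ds (u \<otimes> r) = \<zero>" if "length ds = Suc i" "set ds \<subseteq> D" for ds
  proof -
    have "apply_ders ds r \<in> ?F" using that by blast
    then show ?thesis using apply_ders_denom_mult_left[OF that(2) u(1) r] u(2) by simp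
  qed
  moreover have "u \<otimes> r \<in> carrier R" using u(1) r denom_closed by simp
  ultimately show ?thesis unfolding nil_part_def using u(1) by blast
qed

lemma left_denominator_set_Nring:
  assumes fin: "finite D \<or> ass R S \<subseteq> {\<zero>}"
  shows "left_denominator_set (Nring R D) S"
proof -
  have "mult_set (Nring R D) S"
    unfolding mult_set_def Nring_simps
    using denom_subset_nil_all one_in_denom zero_notin_denom denom_mult_closed by blast
  moreover have "\<exists>t\<in>S. \<exists>r'\<in>nil_all R D. t \<otimes> r = r' \<otimes> s" if s: "s \<in> S" and r: "r \<in> nil_all R D" for s r
  proof -
    obtain i where ri: "r \<in> nil_part R D i" using r unfolding nil_all_def by blast
    have rc: "r \<in> carrier R" using ri nil_part_subset_carrier[of R D] by blast
    obtain t r' where tr: "t \<in> S" "r' \<in> carrier R" "t \<otimes> r = r' \<otimes> s" using left_ore[OF s rc] by blast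
    have "apply_ders ds r' \<in> ass R S" if ds: "length ds = Suc i" "set ds \<subseteq> D" for ds
    proof (rule right_zero_divisor_in_ass)
      show "apply_ders ds r' \<in> carrier R" using apply_ders_closed ds tr by simp
      have "apply_ders ds r' \<otimes> s = apply_ders ds (t \<otimes> r)"
        using apply_ders_denom_mult_right[OF ds(2) s tr(2)] tr(3) by simp
      also have "\<dots> = t \<otimes> apply_ders ds r" using apply_ders_denom_mult_left[OF ds(2) tr(1) rc] .
      also have "\<dots> = \<zero>" using ri ds tr denom_closed unfolding nil_part_def by simp
      finally show "apply_ders ds r' \<otimes> s = \<zero>" .
    qed (rule s)
    then obtain u where u: "u \<in> S" "u \<otimes> r' \<in> nil_part R D i"
      using denom_mult_in_nil_part[OF fin tr(2)] by blast
    have "(u \<otimes> t) \<otimes> r = (u \<otimes> r') \<otimes> s" using tr u s rc denom_closed by (simp add: m_assoc)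
    then show ?thesis using denom_mult_closed[OF u(1) tr(1)] u(2) nil_part_subset_nil_all by blast
  qed
  moreover have "\<exists>t\<in>S. t \<otimes> r = \<zero>" if "r \<in> nil_all R D" "s \<in> S" "r \<otimes> s = \<zero>" for r s
    using right_zero_divisor_in_ass[of r s] that nil_all_subset_carrier[of R D] unfolding ass_def by blast
  ultimately show ?thesis unfolding left_denominator_set_def left_ore_def Nring_simps by blast
qed

lemma ass_Nring: "ass (Nring R D) S = nil_all R D \<inter> ass R S"
  unfolding ass_def Nring_simps using nil_all_subset_carrier[of R D] by blast

end

locale diff_left_fraction_ring = diff_left_denominator R D S + left_fraction_ring R S Q \<sigma>
  for R (structure) and D S and Q :: "('q,'c) ring_scheme" and \<sigma>
begin

lemma der_cong:
  assumes "d \<in> D" "x \<in> carrier R" "y \<in> carrier R" "\<sigma> x = \<sigma> y" shows "\<sigma> (d x) = \<sigma> (d y)"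
proof -
  have "d (x \<ominus> y) \<in> ass R S" using eq_iff_diff_in_ass assms der_ass by blast
  moreover have "d (x \<ominus> y) = d x \<ominus> d y" using der_add der_minus assms by (simp add: minus_eq)
  ultimately show ?thesis using eq_iff_diff_in_ass der_closed assms by simp
qed

text \<open>Writing \<open>u t = b s\<close>, the element \<open>d b\<close> is torsion because \<open>(d b) s = d (u t) = u (d t) = 0\<close>;
  so applying \<open>d\<close> to \<open>b r \<equiv> u r'\<close> (mod \<open>ass(S)\<close>) gives \<open>b (d r) \<equiv> u (d r')\<close>.\<close>
lemma loc_der_well_defined:
  assumes d: "d \<in> D" and st: "s \<in> S" "t \<in> S" and rr: "r \<in> carrier R" "r' \<in> carrier R"
    and eq: "lfrac Q \<sigma> s r = lfrac Q \<sigma> t r'"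
  shows "lfrac Q \<sigma> s (d r) = lfrac Q \<sigma> t (d r')"
proof -
  obtain u b where ub: "u \<in> S" "b \<in> carrier R" "u \<otimes> t = b \<otimes> s"
    using left_ore[OF st(1) denom_closed[OF st(2)]] by blast
  have "d b \<otimes> s = d (b \<otimes> s)" using der_denom_mult_right[OF d st(1) ub(2)] by simp
  also have "\<dots> = d (u \<otimes> t)" using ub by simp
  also have "\<dots> = \<zero>"
    using der_denom_mult_left[OF d ub(1) denom_closed[OF st(2)]] der_denom[OF d st(2)] denom_closed[OF ub(1)]
    by simp
  finally have "\<sigma> (d b) = \<zero>\<^bsub>Q\<^esub>"
    using right_zero_divisor_in_ass[OF der_closed[OF d ub(2)] st(1)] kernel_eq_ass der_closed d ub by blast
  then have "\<sigma> (d (b \<otimes> r)) = \<sigma> (b \<otimes> d r)"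
    using der_mult[OF d ub(2) rr(1)] der_closed d ub rr by simp
  moreover have "\<sigma> (b \<otimes> r) = \<sigma> (u \<otimes> r')" using lfrac_eq_iff[OF st ub(1) rr ub(2,3)] eq by simp
  then have "\<sigma> (d (b \<otimes> r)) = \<sigma> (d (u \<otimes> r'))" using der_cong d ub rr denom_closed by simp
  moreover have "d (u \<otimes> r') = u \<otimes> d r'" using der_denom_mult_left[OF d ub(1) rr(2)] .
  ultimately have "\<sigma> (b \<otimes> d r) = \<sigma> (u \<otimes> d r')" by simp
  then show ?thesis using lfrac_eq_iff[OF st ub(1) der_closed[OF d rr(1)] der_closed[OF d rr(2)] ub(2,3)] by simp
qed

lemma loc_der_lfrac:
  assumes "d \<in> D" "s \<in> S" "r \<in> carrier R"
  shows "loc_der R S Q \<sigma> d (lfrac Q \<sigma> s r) = lfrac Q \<sigma> s (d r)"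
proof -
  have "loc_der R S Q \<sigma> d (lfrac Q \<sigma> s r) =
      (SOME y. \<exists>s'\<in>S. \<exists>r'\<in>carrier R. lfrac Q \<sigma> s r = lfrac Q \<sigma> s' r' \<and> y = lfrac Q \<sigma> s' (d r'))"
    unfolding loc_der_def lfrac_def ..
  also have "\<dots> = lfrac Q \<sigma> s (d r)"
    by (rule SOME_lfrac_repr[OF loc_der_well_defined[OF assms(1)] assms(2,3)])
  finally show ?thesis .
qed

lemma apply_ders_loc_der:
  "set ds \<subseteq> D \<Longrightarrow> s \<in> S \<Longrightarrow> r \<in> carrier R \<Longrightarrow>
    apply_ders (map (loc_der R S Q \<sigma>) ds) (lfrac Q \<sigma> s r) = lfrac Q \<sigma> s (apply_ders ds r)"
  by (induction ds) (auto simp: loc_der_lfrac apply_ders_closed)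

lemma lfrac_in_nil_part_iff:
  assumes "s \<in> S" "r \<in> carrier R"
  shows "lfrac Q \<sigma> s r \<in> nil_part Q (loc_ders R S Q \<sigma> D) i \<longleftrightarrow>
    (\<forall>ds. length ds = Suc i \<longrightarrow> set ds \<subseteq> D \<longrightarrow> apply_ders ds r \<in> ass R S)"
proof -
  have "lfrac Q \<sigma> s r \<in> nil_part Q (loc_ders R S Q \<sigma> D) i \<longleftrightarrow> (\<forall>ds. length ds = Suc i \<longrightarrow> set ds \<subseteq> D \<longrightarrow>
      apply_ders (map (loc_der R S Q \<sigma>) ds) (lfrac Q \<sigma> s r) = \<zero>\<^bsub>Q\<^esub>)"
    unfolding nil_part_def loc_ders_def all_lists_image_iff using lfrac_closed[OF assms] by simp
  also have "\<dots> \<longleftrightarrow> (\<forall>ds. length ds = Suc i \<longrightarrow> set ds \<subseteq> D \<longrightarrow> apply_ders ds r \<in> ass R S)"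
    using apply_ders_loc_der lfrac_eq_zero_iff kernel_eq_ass apply_ders_closed assms by simp
  finally show ?thesis .
qed

lemma nil_part_loc_ders:
  assumes fin: "finite D \<or> ass R S \<subseteq> {\<zero>}"
  shows "nil_part Q (loc_ders R S Q \<sigma> D) i = loc_sub S Q \<sigma> (nil_part R D i)"
proof
  show "nil_part Q (loc_ders R S Q \<sigma> D) i \<subseteq> loc_sub S Q \<sigma> (nil_part R D i)"
  proof
    fix q assume q: "q \<in> nil_part Q (loc_ders R S Q \<sigma> D) i"
    then have "q \<in> carrier Q" unfolding nil_part_def by blast
    then obtain s r where sr: "s \<in> S" "r \<in> carrier R" "q = lfrac Q \<sigma> s r" using lfrac_surj by blast
    then have "apply_ders ds r \<in> ass R S" if "length ds = Suc i" "set ds \<subseteq> D" for ds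
      using q lfrac_in_nil_part_iff that by simp
    then obtain u where u: "u \<in> S" "u \<otimes> r \<in> nil_part R D i"
      using denom_mult_in_nil_part[OF fin sr(2)] by blast
    moreover have "q = lfrac Q \<sigma> (u \<otimes> s) (u \<otimes> r)" using lfrac_cancel u sr by simp
    ultimately show "q \<in> loc_sub S Q \<sigma> (nil_part R D i)"
      unfolding loc_sub_eq using denom_mult_closed[OF u(1) sr(1)] by blast
  qed
  show "loc_sub S Q \<sigma> (nil_part R D i) \<subseteq> nil_part Q (loc_ders R S Q \<sigma> D) i"
  proof
    fix q assume "q \<in> loc_sub S Q \<sigma> (nil_part R D i)"
    then obtain s m where sm: "s \<in> S" "m \<in> nil_part R D i" "q = lfrac Q \<sigma> s m"
      unfolding loc_sub_eq by blast
    have "apply_ders ds m \<in> ass R S" if "length ds = Suc i" "set ds \<subseteq> D" for ds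
      using sm(2) that zero_in_ass unfolding nil_part_def by simp
    then show "q \<in> nil_part Q (loc_ders R S Q \<sigma> D) i"
      using lfrac_in_nil_part_iff sm nil_part_subset_carrier[of R D] by blast
  qed
qed

lemma nil_all_loc_ders:
  assumes "finite D \<or> ass R S \<subseteq> {\<zero>}"
  shows "nil_all Q (loc_ders R S Q \<sigma> D) = loc_sub S Q \<sigma> (nil_all R D)"
  unfolding nil_all_def nil_part_loc_ders[OF assms] loc_sub_def by blast

lemma Nring_localization_iso:
  assumes fin: "finite D \<or> ass R S \<subseteq> {\<zero>}" and lf: "left_fractions (Nring R D) S Q' \<sigma>'"
  shows "\<exists>G. G \<in> ring_iso Q' (Nring Q (loc_ders R S Q \<sigma> D)) \<and> (\<forall>x\<in>nil_all R D. G (\<sigma>' x) = \<sigma> x) \<and>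
    (\<forall>i. G ` loc_sub S Q' \<sigma>' (nil_part R D i) = nil_part Q (loc_ders R S Q \<sigma> D) i)"
proof -
  interpret N: left_fraction_ring "Nring R D" S Q' \<sigma>'
    by (rule left_fraction_ringI[OF ring_Nring left_denominator_set_Nring[OF fin] lf])
  have inv: "inverting_hom (Nring R D) S Q \<sigma>"
    unfolding inverting_hom_def inverting_hom_axioms_def
    using N.left_denominator_axioms Q.ring_axioms denom_Units
      ring_hom_ring.homh[OF \<sigma>.induced_ring_hom[OF subring_nil_all]] unfolding Nring_def by blast
  define G where "G = frac_ext (Nring R D) S Q' \<sigma>' Q \<sigma>"
  have hom: "G \<in> ring_hom Q' Q" unfolding G_def by (rule N.frac_ext_hom[OF inv])
  have inj: "inj_on G (carrier Q')" unfolding G_def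
  proof (rule N.frac_ext_inj[OF inv])
    fix x assume "x \<in> carrier (Nring R D)" "\<sigma> x = \<zero>\<^bsub>Q\<^esub>"
    then show "x \<in> ass (Nring R D) S" using kernel_eq_ass ass_Nring nil_all_subset_carrier[of R D] by auto
  qed
  have img: "G ` loc_sub S Q' \<sigma>' M = loc_sub S Q \<sigma> M" if "M \<subseteq> nil_all R D" for M
    unfolding G_def using N.frac_ext_image[OF inv] that by simp
  have "G ` carrier Q' = nil_all Q (loc_ders R S Q \<sigma> D)"
    using img[of "nil_all R D"] N.carrier_eq_loc_sub nil_all_loc_ders[OF fin] by simp
  then have iso: "G \<in> ring_iso Q' (Nring Q (loc_ders R S Q \<sigma> D))"
    using ring_iso_carrier_restrict[OF hom inj] unfolding Nring_def by simp
  have compat: "G (\<sigma>' x) = \<sigma> x" if x: "x \<in> nil_all R D" for x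
  proof -
    have "G (\<sigma>' x) = G (lfrac Q' \<sigma>' \<one> x)" using N.lfrac_one x by simp
    also have "\<dots> = lfrac Q \<sigma> \<one> x" using N.frac_ext_lfrac[OF inv N.one_in_denom] x unfolding G_def by simp
    also have "\<dots> = \<sigma> x" using lfrac_one x nil_all_subset_carrier[of R D] by blast
    finally show ?thesis .
  qed
  have nil: "G ` loc_sub S Q' \<sigma>' (nil_part R D i) = nil_part Q (loc_ders R S Q \<sigma> D) i" for i
    using img[OF nil_part_subset_nil_all] nil_part_loc_ders[OF fin] by simp
  show ?thesis by (intro exI[of _ G] conjI ballI allI iso compat nil)
qed

end

section \<open>The quotient by the torsion ideal \<open>ass(S)\<close>\<close>

locale torsion_quotient = diff_left_denominator R D S for R (structure) and D S +
  fixes I assumes ideal: "ideal I R" and ass_eq: "ass R S = I"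
begin

abbreviation "Sbar \<equiv> (\<lambda>s. I +> s) ` S"
abbreviation "Dbar \<equiv> quot_der R I ` D"

interpretation I: ideal I R by (rule ideal)

lemma ring_quot: "ring (R Quot I)" by (rule I.quotient_is_ring)

lemma carrier_quot: "carrier (R Quot I) = (\<lambda>x. I +> x) ` carrier R"
  unfolding FactRing_def A_RCOSETS_def' by auto

lemma rcos_mult: "x \<in> carrier R \<Longrightarrow> y \<in> carrier R \<Longrightarrow> (I +> x) \<otimes>\<^bsub>R Quot I\<^esub> (I +> y) = I +> (x \<otimes> y)"
  using ring_hom_mult[OF I.rcos_ring_hom] by metis

lemma rcos_add: "x \<in> carrier R \<Longrightarrow> y \<in> carrier R \<Longrightarrow> (I +> x) \<oplus>\<^bsub>R Quot I\<^esub> (I +> y) = I +> (x \<oplus> y)"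
  using ring_hom_add[OF I.rcos_ring_hom] by metis

lemma one_quot: "\<one>\<^bsub>R Quot I\<^esub> = I +> \<one>" unfolding FactRing_def by simp

lemma zero_quot: "\<zero>\<^bsub>R Quot I\<^esub> = I" unfolding FactRing_def by simp

lemma rcos_eq_iff: "x \<in> carrier R \<Longrightarrow> y \<in> carrier R \<Longrightarrow> I +> x = I +> y \<longleftrightarrow> x \<ominus> y \<in> I"
  using quotient_eq_iff_same_a_r_cos[OF ideal] by blast

lemma rcos_eq_zero_iff: assumes "x \<in> carrier R" shows "I +> x = I \<longleftrightarrow> x \<in> I"
  using rcos_eq_iff[OF assms zero_closed] I.a_rcos_const[OF I.zero_closed] assms by (simp add: minus_eq)

lemma der_ideal: "d \<in> D \<Longrightarrow> x \<in> I \<Longrightarrow> d x \<in> I"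
  using der_ass ass_eq by blast

lemma quot_der_rcos: assumes d: "d \<in> D" and x: "x \<in> carrier R" shows "quot_der R I d (I +> x) = I +> d x"
proof -
  let ?y = "SOME y. y \<in> I +> x"
  have "?y \<in> I +> x" using I.a_rcos_self[OF x] by (rule someI)
  then have y: "?y \<in> carrier R" "?y \<ominus> x \<in> I"
    using I.a_elemrcos_carrier[OF x] I.a_rcos_module_minus[OF ring_axioms x] by auto
  have "d (?y \<ominus> x) = d ?y \<ominus> d x" using der_add[OF d y(1)] der_minus[OF d x] x by (simp add: minus_eq)
  then have "d ?y \<ominus> d x \<in> I" using der_ideal[OF d y(2)] by simp
  then show ?thesis unfolding quot_der_def using rcos_eq_iff der_closed d x y(1) by simp
qed

lemma derivation_quot_der: assumes d: "d \<in> D" shows "derivation (R Quot I) (quot_der R I d)"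
  unfolding derivation_def
proof (intro conjI ballI)
  show "quot_der R I d \<in> carrier (R Quot I) \<rightarrow> carrier (R Quot I)"
    using quot_der_rcos[OF d] der_closed[OF d] unfolding carrier_quot by auto
next
  fix x y assume "x \<in> carrier (R Quot I)" "y \<in> carrier (R Quot I)"
  then obtain a b where ab: "a \<in> carrier R" "b \<in> carrier R" "x = I +> a" "y = I +> b"
    unfolding carrier_quot by blast
  show "quot_der R I d (x \<oplus>\<^bsub>R Quot I\<^esub> y) = quot_der R I d x \<oplus>\<^bsub>R Quot I\<^esub> quot_der R I d y"
    using ab rcos_add quot_der_rcos[OF d] der_add[OF d] der_closed[OF d] by simp
  show "quot_der R I d (x \<otimes>\<^bsub>R Quot I\<^esub> y) =
      quot_der R I d x \<otimes>\<^bsub>R Quot I\<^esub> y \<oplus>\<^bsub>R Quot I\<^esub> x \<otimes>\<^bsub>R Quot I\<^esub> quot_der R I d y"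
    using ab rcos_add rcos_mult quot_der_rcos[OF d] der_mult[OF d] der_closed[OF d] by simp
qed

lemma apply_ders_quot:
  "set ds \<subseteq> D \<Longrightarrow> x \<in> carrier R \<Longrightarrow> apply_ders (map (quot_der R I) ds) (I +> x) = I +> apply_ders ds x"
  by (induction ds) (auto simp: quot_der_rcos apply_ders_closed)

lemma mult_set_quot: "mult_set (R Quot I) Sbar"
  unfolding mult_set_def
proof (intro conjI ballI)
  show "Sbar \<subseteq> carrier (R Quot I)" unfolding carrier_quot using denom_closed by blast
  show "\<one>\<^bsub>R Quot I\<^esub> \<in> Sbar" unfolding one_quot using one_in_denom by blast
  show "\<zero>\<^bsub>R Quot I\<^esub> \<notin> Sbar" unfolding zero_quot
  proof
    assume "I \<in> Sbar"
    then obtain s where s: "s \<in> S" "I +> s = I" by auto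
    then have "s \<in> ass R S" using rcos_eq_zero_iff denom_closed ass_eq by blast
    then obtain t where "t \<in> S" "t \<otimes> s = \<zero>" unfolding ass_def by blast
    then show False using denom_mult_closed[OF _ s(1)] zero_notin_denom by metis
  qed
  fix x y assume "x \<in> Sbar" "y \<in> Sbar"
  then obtain s t where "s \<in> S" "t \<in> S" "x = I +> s" "y = I +> t" by blast
  then show "x \<otimes>\<^bsub>R Quot I\<^esub> y \<in> Sbar" using rcos_mult denom_closed denom_mult_closed by simp
qed

lemma left_denominator_set_quot: "left_denominator_set (R Quot I) Sbar"
proof -
  have "mult_set (R Quot I) Sbar" by (rule mult_set_quot)
  moreover have "\<exists>t\<in>Sbar. \<exists>r'\<in>carrier (R Quot I). t \<otimes>\<^bsub>R Quot I\<^esub> r = r' \<otimes>\<^bsub>R Quot I\<^esub> s"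
    if H: "s \<in> Sbar" "r \<in> carrier (R Quot I)" for s r
  proof -
    obtain s0 r0 where sr: "s0 \<in> S" "r0 \<in> carrier R" "s = I +> s0" "r = I +> r0"
      using H unfolding carrier_quot by blast
    obtain t r' where tr: "t \<in> S" "r' \<in> carrier R" "t \<otimes> r0 = r' \<otimes> s0" using left_ore[OF sr(1,2)] by blast
    have "(I +> t) \<otimes>\<^bsub>R Quot I\<^esub> r = (I +> r') \<otimes>\<^bsub>R Quot I\<^esub> s" using sr tr rcos_mult denom_closed by simp
    then show ?thesis using tr unfolding carrier_quot by blast
  qed
  moreover have "\<exists>t\<in>Sbar. t \<otimes>\<^bsub>R Quot I\<^esub> r = \<zero>\<^bsub>R Quot I\<^esub>"
    if H: "r \<in> carrier (R Quot I)" "s \<in> Sbar" "r \<otimes>\<^bsub>R Quot I\<^esub> s = \<zero>\<^bsub>R Quot I\<^esub>" for r s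
  proof -
    obtain s0 r0 where sr: "s0 \<in> S" "r0 \<in> carrier R" "s = I +> s0" "r = I +> r0"
      using H unfolding carrier_quot by blast
    have "r0 \<otimes> s0 \<in> ass R S" using H sr rcos_mult zero_quot rcos_eq_zero_iff denom_closed ass_eq by simp
    then have "r0 \<in> I" using ass_denom_mult_right_cancel[OF sr(1,2)] ass_eq by blast
    then have "(I +> \<one>) \<otimes>\<^bsub>R Quot I\<^esub> r = \<zero>\<^bsub>R Quot I\<^esub>" using sr rcos_mult zero_quot rcos_eq_zero_iff by simp
    then show ?thesis using one_in_denom by blast
  qed
  ultimately show ?thesis unfolding left_denominator_set_def left_ore_def by blast
qed

lemma ass_quot: "ass (R Quot I) Sbar = {\<zero>\<^bsub>R Quot I\<^esub>}"
proof
  show "ass (R Quot I) Sbar \<subseteq> {\<zero>\<^bsub>R Quot I\<^esub>}"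
  proof
    fix r assume "r \<in> ass (R Quot I) Sbar"
    then obtain s0 r0 where sr: "s0 \<in> S" "r0 \<in> carrier R" "r = I +> r0"
      and "(I +> s0) \<otimes>\<^bsub>R Quot I\<^esub> (I +> r0) = \<zero>\<^bsub>R Quot I\<^esub>"
      unfolding ass_def carrier_quot by blast
    then have "s0 \<otimes> r0 \<in> ass R S" using rcos_mult zero_quot rcos_eq_zero_iff denom_closed ass_eq by simp
    then have "r0 \<in> I" using ass_denom_mult_left_cancel[OF sr(1,2)] ass_eq by blast
    then show "r \<in> {\<zero>\<^bsub>R Quot I\<^esub>}" using sr zero_quot rcos_eq_zero_iff by simp
  qed
  show "{\<zero>\<^bsub>R Quot I\<^esub>} \<subseteq> ass (R Quot I) Sbar"
    using left_denominator.zero_in_ass[of "R Quot I" Sbar] ring_quot left_denominator_set_quot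
    unfolding left_denominator_def left_denominator_axioms_def by blast
qed

lemma Sbar_constant: "Sbar \<subseteq> nil_part (R Quot I) Dbar 0"
proof
  fix s assume "s \<in> Sbar"
  then obtain s0 where s0: "s0 \<in> S" "s = I +> s0" by blast
  have "quot_der R I d s = \<zero>\<^bsub>R Quot I\<^esub>" if "d \<in> D" for d
    using quot_der_rcos[OF that denom_closed[OF s0(1)]] der_denom[OF that s0(1)] s0(2)
      I.a_rcos_const[OF I.zero_closed] zero_quot by simp
  then show "s \<in> nil_part (R Quot I) Dbar 0"
    unfolding nil_part_def using s0 denom_closed carrier_quot by (auto simp: length_Suc_conv)
qed

lemma diff_left_denominator_quot: "diff_left_denominator (R Quot I) Dbar Sbar"
  unfolding diff_left_denominator_def diff_left_denominator_axioms_def diff_ring_def diff_ring_axioms_def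
    left_denominator_def left_denominator_axioms_def
  using ring_quot derivation_quot_der left_denominator_set_quot Sbar_constant by blast

lemma rcos_in_nil_part_quot_iff:
  assumes "r \<in> carrier R"
  shows "I +> r \<in> nil_part (R Quot I) Dbar i \<longleftrightarrow>
    (\<forall>ds. length ds = Suc i \<longrightarrow> set ds \<subseteq> D \<longrightarrow> apply_ders ds r \<in> I)"
proof -
  have "I +> r \<in> nil_part (R Quot I) Dbar i \<longleftrightarrow> (\<forall>ds. length ds = Suc i \<longrightarrow> set ds \<subseteq> D \<longrightarrow>
      apply_ders (map (quot_der R I) ds) (I +> r) = \<zero>\<^bsub>R Quot I\<^esub>)"
    unfolding nil_part_def all_lists_image_iff using assms carrier_quot by auto
  also have "\<dots> \<longleftrightarrow> (\<forall>ds. length ds = Suc i \<longrightarrow> set ds \<subseteq> D \<longrightarrow> apply_ders ds r \<in> I)"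
    using apply_ders_quot zero_quot rcos_eq_zero_iff apply_ders_closed assms by simp
  finally show ?thesis .
qed

context
  fixes Q :: "('q,'c) ring_scheme" and \<sigma> and Qb :: "('qb,'cb) ring_scheme" and \<sigma>b
  assumes lf: "left_fractions R S Q \<sigma>" and lfb: "left_fractions (R Quot I) Sbar Qb \<sigma>b"
begin

interpretation L: diff_left_fraction_ring R D S Q \<sigma>
  unfolding diff_left_fraction_ring_def
  using diff_left_denominator_axioms left_fraction_ringI[OF ring_axioms left_denominator_set lf] by blast

interpretation Lb: diff_left_fraction_ring "R Quot I" Dbar Sbar Qb \<sigma>b
  unfolding diff_left_fraction_ring_def
  using diff_left_denominator_quot left_fraction_ringI[OF ring_quot left_denominator_set_quot lfb] by blast

lemma inverting_hom_quot: "inverting_hom R S Qb (\<sigma>b \<circ> (\<lambda>x. I +> x))"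
  unfolding inverting_hom_def inverting_hom_axioms_def
  using left_denominator_axioms Lb.ring_T ring_hom_trans[OF I.rcos_ring_hom Lb.hom]
    Lb.denom_Units by auto

lemma quot_frac_ext_lfrac:
  "s \<in> S \<Longrightarrow> r \<in> carrier R \<Longrightarrow>
    frac_ext R S Q \<sigma> Qb (\<sigma>b \<circ> (\<lambda>x. I +> x)) (lfrac Q \<sigma> s r) = lfrac Qb \<sigma>b (I +> s) (I +> r)"
  using L.frac_ext_lfrac[OF inverting_hom_quot] unfolding lfrac_def by simp

lemma quot_frac_ext_iso: "frac_ext R S Q \<sigma> Qb (\<sigma>b \<circ> (\<lambda>x. I +> x)) \<in> ring_iso Q Qb"
proof -
  let ?H = "frac_ext R S Q \<sigma> Qb (\<sigma>b \<circ> (\<lambda>x. I +> x))"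
  have inj: "inj_on ?H (carrier Q)"
  proof (rule L.frac_ext_inj[OF inverting_hom_quot])
    fix x assume x: "x \<in> carrier R" "(\<sigma>b \<circ> (\<lambda>x. I +> x)) x = \<zero>\<^bsub>Qb\<^esub>"
    then have "I +> x \<in> ass (R Quot I) Sbar" using Lb.kernel_eq_ass carrier_quot by auto
    then show "x \<in> ass R S" using ass_quot zero_quot rcos_eq_zero_iff x(1) ass_eq by simp
  qed
  have "?H ` carrier Q = carrier Qb"
    using L.frac_ext_image[OF inverting_hom_quot subset_refl] L.carrier_eq_loc_sub Lb.carrier_eq_loc_sub
      loc_sub_comp carrier_quot by simp
  then show ?thesis
    using L.frac_ext_hom[OF inverting_hom_quot] inj unfolding ring_iso_def bij_betw_def by blast
qed

lemma quot_frac_ext_nil_part: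
  "frac_ext R S Q \<sigma> Qb (\<sigma>b \<circ> (\<lambda>x. I +> x)) ` nil_part Q (loc_ders R S Q \<sigma> D) i =
    nil_part Qb (loc_ders (R Quot I) Sbar Qb \<sigma>b Dbar) i"
proof -
  let ?H = "frac_ext R S Q \<sigma> Qb (\<sigma>b \<circ> (\<lambda>x. I +> x))"
  let ?N = "nil_part Q (loc_ders R S Q \<sigma> D) i" and ?Nb = "nil_part Qb (loc_ders (R Quot I) Sbar Qb \<sigma>b Dbar) i"
  have nil_iff: "?H q \<in> ?Nb \<longleftrightarrow> q \<in> ?N" if q: "q \<in> carrier Q" for q
  proof -
    obtain s r where sr: "s \<in> S" "r \<in> carrier R" "q = lfrac Q \<sigma> s r" using L.lfrac_surj q by blast
    have rb: "I +> r \<in> carrier (R Quot I)" using sr carrier_quot by blast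
    have "?H q = lfrac Qb \<sigma>b (I +> s) (I +> r)" using quot_frac_ext_lfrac sr by simp
    then have "?H q \<in> ?Nb \<longleftrightarrow> (\<forall>ds'. length ds' = Suc i \<longrightarrow> set ds' \<subseteq> Dbar \<longrightarrow>
        apply_ders ds' (I +> r) \<in> ass (R Quot I) Sbar)"
      using Lb.lfrac_in_nil_part_iff sr(1) rb by simp
    also have "\<dots> \<longleftrightarrow> I +> r \<in> nil_part (R Quot I) Dbar i"
      unfolding ass_quot nil_part_def using rb by simp
    also have "\<dots> \<longleftrightarrow> (\<forall>ds. length ds = Suc i \<longrightarrow> set ds \<subseteq> D \<longrightarrow> apply_ders ds r \<in> I)"
      using rcos_in_nil_part_quot_iff sr(2) .
    also have "\<dots> \<longleftrightarrow> q \<in> ?N" using L.lfrac_in_nil_part_iff sr ass_eq by simp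
    finally show ?thesis .
  qed
  have surj: "?H ` carrier Q = carrier Qb" using quot_frac_ext_iso unfolding ring_iso_def bij_betw_def by blast
  show ?thesis by (rule image_eq_if_preimage[OF surj nil_part_subset_carrier nil_part_subset_carrier nil_iff])
qed

end

end

section \<open>Algebras with \<open>A\<close>-linear derivations\<close>

locale derivation_localization = torsion_quotient E \<Delta> S I for E (structure) and \<Delta> S I +
  fixes K :: "('k,'c) ring_scheme" and phi and A
  assumes kalgebra: "kalgebra K E phi"
    and subalgebra: "subalgebra K E phi A"
    and der_A: "d \<in> \<Delta> \<Longrightarrow> der_A E A d"
begin

lemma A_linear: "d \<in> \<Delta> \<Longrightarrow> a \<in> A \<Longrightarrow> x \<in> carrier E \<Longrightarrow> d (a \<otimes> x) = a \<otimes> d x"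
  using der_A unfolding der_A_def by blast

lemma A_subset_carrier: "A \<subseteq> carrier E"
  using subalgebra subringE(1) unfolding subalgebra_def by blast

lemma phi_in_A: "k \<in> carrier K \<Longrightarrow> phi k \<in> A"
  using subalgebra unfolding subalgebra_def by blast

lemma phi_in_nil_part_0: assumes "k \<in> carrier K" shows "phi k \<in> nil_part E \<Delta> 0"
proof -
  have c: "phi k \<in> carrier E" using phi_in_A[OF assms] A_subset_carrier by blast
  have "d (phi k) = \<zero>" if d: "d \<in> \<Delta>" for d
    using A_linear[OF d phi_in_A[OF assms] one_closed] der_one[OF d] c by simp
  then show ?thesis unfolding nil_part_0 using c by blast
qed

lemma phi_in_nil_all: "k \<in> carrier K \<Longrightarrow> phi k \<in> nil_all E \<Delta>"
  using phi_in_nil_part_0 nil_part_subset_nil_all by blast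

lemma rcos_phi_in_nil_all_quot:
  assumes "k \<in> carrier K" shows "I +> phi k \<in> nil_all (E Quot I) Dbar"
proof -
  have c: "phi k \<in> carrier E" using phi_in_A[OF assms] A_subset_carrier by blast
  have "apply_ders ds (phi k) \<in> I" if "length ds = Suc 0" "set ds \<subseteq> \<Delta>" for ds
    using phi_in_nil_part_0[OF assms] that zero_in_ass ass_eq unfolding nil_part_def by simp
  then have "I +> phi k \<in> nil_part (E Quot I) Dbar 0" using rcos_in_nil_part_quot_iff[OF c] by blast
  then show ?thesis unfolding nil_all_def by blast
qed

lemma der_A_quot_der:
  assumes d: "d \<in> \<Delta>" shows "der_A (E Quot I) ((\<lambda>a. I +> a) ` A) (quot_der E I d)"
  unfolding der_A_def
proof (intro conjI ballI)
  show "derivation (E Quot I) (quot_der E I d)" by (rule derivation_quot_der[OF d])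
  fix a' x assume "a' \<in> (\<lambda>a. I +> a) ` A" "x \<in> carrier (E Quot I)"
  then obtain a e where ae: "a \<in> A" "a' = I +> a" "e \<in> carrier E" "x = I +> e"
    unfolding carrier_quot by blast
  then have "a \<in> carrier E" using A_subset_carrier by blast
  then show "quot_der E I d (a' \<otimes>\<^bsub>E Quot I\<^esub> x) = a' \<otimes>\<^bsub>E Quot I\<^esub> quot_der E I d x"
    using ae rcos_mult quot_der_rcos[OF d] A_linear[OF d] der_closed[OF d] by simp
qed

lemma Nring_localization_alg_iso:
  fixes Q :: "('q,'d) ring_scheme" and \<sigma> and Q' :: "('q2,'d2) ring_scheme" and \<sigma>'
  assumes fin: "finite \<Delta>" and lf: "left_fractions E S Q \<sigma>" and lf': "left_fractions (Nring E \<Delta>) S Q' \<sigma>'"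
  shows "\<exists>f. alg_iso K (Nring Q (loc_ders E S Q \<sigma> \<Delta>)) (\<sigma> \<circ> phi) Q' (\<sigma>' \<circ> phi) f \<and>
    (\<forall>i. f ` nil_part Q (loc_ders E S Q \<sigma> \<Delta>) i = loc_sub S Q' \<sigma>' (nil_part E \<Delta> i))"
proof -
  interpret L: diff_left_fraction_ring E \<Delta> S Q \<sigma>
    unfolding diff_left_fraction_ring_def
    using diff_left_denominator_axioms left_fraction_ringI[OF ring_axioms left_denominator_set lf] by blast
  interpret N: left_fraction_ring "Nring E \<Delta>" S Q' \<sigma>'
    using left_fraction_ringI[OF ring_Nring left_denominator_set_Nring lf'] fin by blast
  obtain G where G: "G \<in> ring_iso Q' (Nring Q (loc_ders E S Q \<sigma> \<Delta>))"
    "\<forall>x\<in>nil_all E \<Delta>. G (\<sigma>' x) = \<sigma> x"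
    "\<forall>i. G ` loc_sub S Q' \<sigma>' (nil_part E \<Delta> i) = nil_part Q (loc_ders E S Q \<sigma> \<Delta>) i"
    using L.Nring_localization_iso[OF _ lf'] fin by blast
  have inj: "inj_on G (carrier Q')" using G(1) unfolding ring_iso_def bij_betw_def by blast
  have phi: "\<sigma>' (phi k) \<in> carrier Q'" "G (\<sigma>' (phi k)) = \<sigma> (phi k)" if "k \<in> carrier K" for k
    using ring_hom_closed[OF N.hom] G(2) phi_in_nil_all[OF that] by simp_all
  have "alg_iso K (Nring Q (loc_ders E S Q \<sigma> \<Delta>)) (\<sigma> \<circ> phi) Q' (\<sigma>' \<circ> phi) (inv_into (carrier Q') G)"
    using alg_iso_inv_into[OF N.ring_T G(1), of K "\<sigma>' \<circ> phi" "\<sigma> \<circ> phi"] phi by simp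
  moreover have "loc_sub S Q' \<sigma>' (nil_part E \<Delta> i) \<subseteq> carrier Q'" for i
  proof
    fix q assume "q \<in> loc_sub S Q' \<sigma>' (nil_part E \<Delta> i)"
    then obtain s m where "s \<in> S" "m \<in> nil_part E \<Delta> i" "q = lfrac Q' \<sigma>' s m" unfolding loc_sub_eq by blast
    then show "q \<in> carrier Q'" using N.lfrac_closed nil_part_subset_nil_all by auto
  qed
  then have "inv_into (carrier Q') G ` nil_part Q (loc_ders E S Q \<sigma> \<Delta>) i = loc_sub S Q' \<sigma>' (nil_part E \<Delta> i)" for i
    using G(3) inv_into_image_cancel[OF inj] by metis
  ultimately show ?thesis by blast
qed

lemma quotient_localization_alg_iso:
  fixes Q :: "('q,'d) ring_scheme" and \<sigma> and Qb :: "('qb,'db) ring_scheme" and \<sigma>b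
  assumes lf: "left_fractions E S Q \<sigma>" and lfb: "left_fractions (E Quot I) Sbar Qb \<sigma>b"
  shows "\<exists>h. alg_iso K Qb (\<lambda>k. \<sigma>b (I +> phi k)) Q (\<sigma> \<circ> phi) h \<and>
    alg_iso K (Nring Qb (loc_ders (E Quot I) Sbar Qb \<sigma>b Dbar)) (\<lambda>k. \<sigma>b (I +> phi k))
      (Nring Q (loc_ders E S Q \<sigma> \<Delta>)) (\<sigma> \<circ> phi) h \<and>
    (\<forall>i. h ` nil_part Qb (loc_ders (E Quot I) Sbar Qb \<sigma>b Dbar) i = nil_part Q (loc_ders E S Q \<sigma> \<Delta>) i)"
proof -
  interpret L: left_fraction_ring E S Q \<sigma>
    by (rule left_fraction_ringI[OF ring_axioms left_denominator_set lf])
  interpret Lb: left_fraction_ring "E Quot I" Sbar Qb \<sigma>b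
    by (rule left_fraction_ringI[OF ring_quot left_denominator_set_quot lfb])
  let ?H = "frac_ext E S Q \<sigma> Qb (\<sigma>b \<circ> (\<lambda>x. I +> x))"
  let ?h = "inv_into (carrier Q) ?H"
  let ?Dl = "loc_ders E S Q \<sigma> \<Delta>" and ?Dbl = "loc_ders (E Quot I) Sbar Qb \<sigma>b Dbar"
  have iso: "?H \<in> ring_iso Q Qb" by (rule quot_frac_ext_iso[OF lf lfb])
  have inj: "inj_on ?H (carrier Q)" using iso unfolding ring_iso_def bij_betw_def by blast
  have phi: "\<sigma> (phi k) \<in> carrier Q" "?H (\<sigma> (phi k)) = \<sigma>b (I +> phi k)" if "k \<in> carrier K" for k
  proof -
    have c: "phi k \<in> carrier E" using phi_in_A[OF that] A_subset_carrier by blast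
    show "\<sigma> (phi k) \<in> carrier Q" using ring_hom_closed[OF L.hom c] .
    have "?H (\<sigma> (phi k)) = ?H (lfrac Q \<sigma> \<one> (phi k))" using L.lfrac_one c by simp
    also have "\<dots> = lfrac Qb \<sigma>b \<one>\<^bsub>E Quot I\<^esub> (I +> phi k)"
      using quot_frac_ext_lfrac[OF lf lfb one_in_denom c] one_quot by simp
    also have "\<dots> = \<sigma>b (I +> phi k)" using Lb.lfrac_one c carrier_quot by blast
    finally show "?H (\<sigma> (phi k)) = \<sigma>b (I +> phi k)" .
  qed
  have h: "alg_iso K Qb (\<lambda>k. \<sigma>b (I +> phi k)) Q (\<sigma> \<circ> phi) ?h"
    using alg_iso_inv_into[OF L.ring_T iso, of K "\<sigma> \<circ> phi" "\<lambda>k. \<sigma>b (I +> phi k)"] phi by simp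
  have nil: "?h ` nil_part Qb ?Dbl i = nil_part Q ?Dl i" for i
    using quot_frac_ext_nil_part[OF lf lfb, of i, symmetric] inv_into_image_cancel[OF inj nil_part_subset_carrier]
    by simp
  then have "?h ` nil_all Qb ?Dbl = nil_all Q ?Dl" unfolding nil_all_def by (simp add: image_UN)
  then have "alg_iso K (Nring Qb ?Dbl) (\<lambda>k. \<sigma>b (I +> phi k)) (Nring Q ?Dl) (\<sigma> \<circ> phi) ?h"
    unfolding Nring_def by (rule alg_iso_carrier_restrict[OF h nil_all_subset_carrier])
  then show ?thesis using h nil by blast
qed

lemma quotient_Nring_localization_alg_iso:
  fixes Qb :: "('qb,'db) ring_scheme" and \<sigma>b and Qb' :: "('qb2,'db2) ring_scheme" and \<sigma>b'
  assumes lfb: "left_fractions (E Quot I) Sbar Qb \<sigma>b"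
    and lfb': "left_fractions (Nring (E Quot I) Dbar) Sbar Qb' \<sigma>b'"
  shows "\<exists>g. alg_iso K Qb' (\<lambda>k. \<sigma>b' (I +> phi k))
      (Nring Qb (loc_ders (E Quot I) Sbar Qb \<sigma>b Dbar)) (\<lambda>k. \<sigma>b (I +> phi k)) g \<and>
    (\<forall>i. g ` loc_sub Sbar Qb' \<sigma>b' (nil_part (E Quot I) Dbar i) =
      nil_part Qb (loc_ders (E Quot I) Sbar Qb \<sigma>b Dbar) i)"
proof -
  interpret Lb: diff_left_fraction_ring "E Quot I" Dbar Sbar Qb \<sigma>b
    unfolding diff_left_fraction_ring_def
    using diff_left_denominator_quot left_fraction_ringI[OF ring_quot left_denominator_set_quot lfb] by blast
  obtain G where G: "G \<in> ring_iso Qb' (Nring Qb (loc_ders (E Quot I) Sbar Qb \<sigma>b Dbar))"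
    "\<forall>x\<in>nil_all (E Quot I) Dbar. G (\<sigma>b' x) = \<sigma>b x"
    "\<forall>i. G ` loc_sub Sbar Qb' \<sigma>b' (nil_part (E Quot I) Dbar i) = nil_part Qb (loc_ders (E Quot I) Sbar Qb \<sigma>b Dbar) i"
    using Lb.Nring_localization_iso[OF _ lfb'] ass_quot by blast
  then show ?thesis unfolding alg_iso_def using rcos_phi_in_nil_all_quot by blast
qed

lemma quotient_localization_alg_isos:
  fixes Q :: "('q,'d) ring_scheme" and \<sigma> and Qb :: "('qb,'db) ring_scheme" and \<sigma>b
    and Qb' :: "('qb2,'db2) ring_scheme" and \<sigma>b'
  assumes "left_fractions E S Q \<sigma>" "left_fractions (E Quot I) Sbar Qb \<sigma>b"
    and "left_fractions (Nring (E Quot I) Dbar) Sbar Qb' \<sigma>b'"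
  shows "(\<exists>f. alg_iso K Qb (\<lambda>k. \<sigma>b (I +> phi k)) Q (\<sigma> \<circ> phi) f) \<and>
    (\<exists>g h. alg_iso K Qb' (\<lambda>k. \<sigma>b' (I +> phi k))
        (Nring Qb (loc_ders (E Quot I) Sbar Qb \<sigma>b Dbar)) (\<lambda>k. \<sigma>b (I +> phi k)) g \<and>
      alg_iso K (Nring Qb (loc_ders (E Quot I) Sbar Qb \<sigma>b Dbar)) (\<lambda>k. \<sigma>b (I +> phi k))
        (Nring Q (loc_ders E S Q \<sigma> \<Delta>)) (\<sigma> \<circ> phi) h \<and>
      (\<forall>i. g ` loc_sub Sbar Qb' \<sigma>b' (nil_part (E Quot I) Dbar i) =
          nil_part Qb (loc_ders (E Quot I) Sbar Qb \<sigma>b Dbar) i \<and>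
        h ` nil_part Qb (loc_ders (E Quot I) Sbar Qb \<sigma>b Dbar) i = nil_part Q (loc_ders E S Q \<sigma> \<Delta>) i))"
proof -
  obtain h where "alg_iso K Qb (\<lambda>k. \<sigma>b (I +> phi k)) Q (\<sigma> \<circ> phi) h"
    "alg_iso K (Nring Qb (loc_ders (E Quot I) Sbar Qb \<sigma>b Dbar)) (\<lambda>k. \<sigma>b (I +> phi k))
      (Nring Q (loc_ders E S Q \<sigma> \<Delta>)) (\<sigma> \<circ> phi) h"
    "\<forall>i. h ` nil_part Qb (loc_ders (E Quot I) Sbar Qb \<sigma>b Dbar) i = nil_part Q (loc_ders E S Q \<sigma> \<Delta>) i"
    using quotient_localization_alg_iso[OF assms(1,2)] by blast
  moreover obtain g where "alg_iso K Qb' (\<lambda>k. \<sigma>b' (I +> phi k))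
      (Nring Qb (loc_ders (E Quot I) Sbar Qb \<sigma>b Dbar)) (\<lambda>k. \<sigma>b (I +> phi k)) g"
    "\<forall>i. g ` loc_sub Sbar Qb' \<sigma>b' (nil_part (E Quot I) Dbar i) =
      nil_part Qb (loc_ders (E Quot I) Sbar Qb \<sigma>b Dbar) i"
    using quotient_Nring_localization_alg_iso[OF assms(2,3)] by blast
  ultimately show ?thesis by blast
qed

end

lemma derivation_localizationI:
  assumes "kalgebra K E phi" "subalgebra K E phi A" "\<forall>d\<in>\<Delta>. der_A E A d" "ideal I E"
    "left_denominator_set E S" "ass E S = I" "S \<subseteq> nil_part E \<Delta> 0"
  shows "derivation_localization E \<Delta> S I K phi A"
proof -
  have "ring E" using assms(1) unfolding kalgebra_def by blast
  then show ?thesis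
    by (intro derivation_localization.intro torsion_quotient.intro diff_left_denominator.intro
        diff_ring.intro diff_ring_axioms.intro left_denominator.intro left_denominator_axioms.intro
        diff_left_denominator_axioms.intro torsion_quotient_axioms.intro derivation_localization_axioms.intro)
      (use assms in \<open>auto simp: der_A_def\<close>)
qed

theorem proposition2p6:
  fixes K :: "'k ring" and E :: "'e ring" and phi :: "'k \<Rightarrow> 'e"
    and A :: "'e set" and \<Delta> :: "('e \<Rightarrow> 'e) set" and I :: "'e set" and S :: "'e set"
  assumes "field K"
    and "kalgebra K E phi"
    and "subalgebra K E phi A"
    and "\<forall>d\<in>\<Delta>. der_A E A d"
    and "ideal I E"
    and "left_denominator_set E S"
    and "ass E S = I"
    and "S \<subseteq> nil_part E \<Delta> 0"
  shows
   \<comment> \<open>(1)\<close>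
   "(\<forall>d\<in>\<Delta>. d ` I \<subseteq> I) \<and>
    (\<forall>d\<in>\<Delta>. der_A (E Quot I) ((\<lambda>a. I +>\<^bsub>E\<^esub> a) ` A) (quot_der E I d) \<and>
        (\<forall>e\<in>carrier E. quot_der E I d (I +>\<^bsub>E\<^esub> e) = I +>\<^bsub>E\<^esub> d e))
   \<comment> \<open>(2)\<close>
    \<and> (finite \<Delta> \<longrightarrow> left_denominator_set (Nring E \<Delta>) S \<and>
         ass (Nring E \<Delta>) S = nil_all E \<Delta> \<inter> I)
   \<comment> \<open>(3) and (4)\<close>
    \<and> (finite \<Delta> \<longrightarrow>
        (\<forall>(Q :: 'q ring) \<sigma> (Q' :: 'q2 ring) \<sigma>'.
           left_fractions E S Q \<sigma> \<longrightarrow> left_fractions (Nring E \<Delta>) S Q' \<sigma>' \<longrightarrow>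
           (\<exists>f. alg_iso K (Nring Q (loc_ders E S Q \<sigma> \<Delta>)) (\<sigma> \<circ> phi) Q' (\<sigma>' \<circ> phi) f \<and>
                (\<forall>i. f ` nil_part Q (loc_ders E S Q \<sigma> \<Delta>) i
                       = loc_sub S Q' \<sigma>' (nil_part E \<Delta> i)))))
   \<comment> \<open>(5)\<close>
    \<and> left_denominator_set (E Quot I) ((\<lambda>s. I +>\<^bsub>E\<^esub> s) ` S)
    \<and> (\<forall>(Q :: 'q ring) \<sigma> (Qb :: 'q3 ring) \<sigma>b (Qb' :: 'q4 ring) \<sigma>b'.
         left_fractions E S Q \<sigma> \<longrightarrow>
         left_fractions (E Quot I) ((\<lambda>s. I +>\<^bsub>E\<^esub> s) ` S) Qb \<sigma>b \<longrightarrow>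
         left_fractions (Nring (E Quot I) (quot_der E I ` \<Delta>)) ((\<lambda>s. I +>\<^bsub>E\<^esub> s) ` S) Qb' \<sigma>b' \<longrightarrow>
         (\<exists>f. alg_iso K Qb (\<lambda>k. \<sigma>b (I +>\<^bsub>E\<^esub> phi k)) Q (\<sigma> \<circ> phi) f) \<and>
         (\<exists>g h.
            alg_iso K Qb' (\<lambda>k. \<sigma>b' (I +>\<^bsub>E\<^esub> phi k))
              (Nring Qb (loc_ders (E Quot I) ((\<lambda>s. I +>\<^bsub>E\<^esub> s) ` S) Qb \<sigma>b (quot_der E I ` \<Delta>)))
              (\<lambda>k. \<sigma>b (I +>\<^bsub>E\<^esub> phi k)) g \<and>
            alg_iso K
              (Nring Qb (loc_ders (E Quot I) ((\<lambda>s. I +>\<^bsub>E\<^esub> s) ` S) Qb \<sigma>b (quot_der E I ` \<Delta>)))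
              (\<lambda>k. \<sigma>b (I +>\<^bsub>E\<^esub> phi k))
              (Nring Q (loc_ders E S Q \<sigma> \<Delta>)) (\<sigma> \<circ> phi) h \<and>
            (\<forall>i. g ` loc_sub ((\<lambda>s. I +>\<^bsub>E\<^esub> s) ` S) Qb' \<sigma>b'
                          (nil_part (E Quot I) (quot_der E I ` \<Delta>) i)
                   = nil_part Qb (loc_ders (E Quot I) ((\<lambda>s. I +>\<^bsub>E\<^esub> s) ` S) Qb \<sigma>b (quot_der E I ` \<Delta>)) i \<and>
                 h ` nil_part Qb (loc_ders (E Quot I) ((\<lambda>s. I +>\<^bsub>E\<^esub> s) ` S) Qb \<sigma>b (quot_der E I ` \<Delta>)) i
                   = nil_part Q (loc_ders E S Q \<sigma> \<Delta>) i)))"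
proof -
  interpret derivation_localization E \<Delta> S I K phi A
    by (rule derivation_localizationI) (use assms in blast)+
  show ?thesis
  proof (intro conjI)
    show "\<forall>d\<in>\<Delta>. d ` I \<subseteq> I" using der_ideal by blast
    show "\<forall>d\<in>\<Delta>. der_A (E Quot I) ((\<lambda>a. I +>\<^bsub>E\<^esub> a) ` A) (quot_der E I d) \<and>
        (\<forall>e\<in>carrier E. quot_der E I d (I +>\<^bsub>E\<^esub> e) = I +>\<^bsub>E\<^esub> d e)"
      using der_A_quot_der quot_der_rcos by blast
    show "finite \<Delta> \<longrightarrow> left_denominator_set (Nring E \<Delta>) S \<and> ass (Nring E \<Delta>) S = nil_all E \<Delta> \<inter> I"
      using left_denominator_set_Nring ass_Nring ass_eq by blast
    show "left_denominator_set (E Quot I) ((\<lambda>s. I +>\<^bsub>E\<^esub> s) ` S)" by (rule left_denominator_set_quot)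
  qed (intro impI allI; (rule Nring_localization_alg_iso quotient_localization_alg_isos; assumption))+
qed

end
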